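(* Let $J\subset\mathbb Z$ be a finite interval, $J'\subseteq J$ a subinterval and $n\ge1$. Let $\tilde\xi_n^{J'\subset J}$ be the unique polynomial of $\mathbb Q_p[x]$ of degree $<((p-1)|J'|+|J|)p^{n-1}$ such that $\tilde\xi_n^{J'\subset J}\equiv \xi_n^{(j)}/p\pmod{\omega_n^{(j)}}$ for $j\in J'$ and $\tilde\xi_n^{J'\subset J}\equiv 1\pmod{\omega_{n-1}^{(j)}}$ for $j\in J\setminus J'$. Then $$\tilde\xi_n^{J'\subset J}=(\ell_n^{J'}\bmod \omega_{n-1}^{J})^{-1}\,\ell_n^{J'},$$ $\tilde\xi_n^{J'\subset J}\equiv 0\pmod{\omega_n^{J'}/\omega_{n-1}^{J'}}$, $\tilde\xi_n^{J'\subset J}\equiv1\pmod{\omega_{n-1}^{J}}$, and $$p^{|J'|}\le\|\tilde\xi_n^{J'\subset J}\|_1\le p^{\,|J'|+\left\lfloor \frac{|J|-1}{p-1}+\max\left(0,\ \frac1{p-1}+\mathrm{ord}_p((|J|-1)!)-\mathrm{ord}_p(u^{p^{n-1}}-1)\right)\right\rfloor}.$$ In particular, for $n>\mathrm{ord}_p((|J|-1)!)-(\mathrm{ord}_p(u-1)-1)$ one has $p^{|J'|}\le\|\tilde\xi_n^{J'\subset J}\|_1\le p^{|J'|+\tilde\beta(|J|)}$, and if moreover $\tilde\beta(|J|)=0$ then $\tilde\xi_n^{J'\subset J}/\ell_n^{J'}$ is a unit of $\mathbb Z_p[[x]]$.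
   Context: Let $p$ be an odd prime and $u\in1+p\mathbb Z_p$ with $u\ne1$. For a polynomial $f\in\mathbb Q_p[x]$, $\|f\|_1$ is the maximum of the $p$-adic absolute values of its coefficients. For $f\in\mathbb Q_p[[x]]$ and $j\in\mathbb Z$ put $f^{(j)}(x)=f(u^{-j}(1+x)-1)$. Let $\omega_n=(1+x)^{p^n}-1$ ($n\ge0$), $\xi_n=\omega_n/\omega_{n-1}$ ($n\ge1$), $\xi_0=px$. For a finite set $S\subset\mathbb Z$ of cardinality $|S|$, $\omega_n^{S}=\prod_{j\in S}\omega_n^{(j)}$ and $\ell_n^{S}=\prod_{j\in S}\xi_n^{(j)}/p$ (empty products equal $1$). For coprime polynomials $P,Q$, $(P\bmod Q)^{-1}$ is the unique polynomial $R$ of degree $<\deg Q$ with $RP\equiv1\pmod Q$. Put $\tilde\beta(s)=\lfloor (s-1)/(p-1)\rfloor$. *)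

theory Defs
  imports "HOL-Computational_Algebra.Computational_Algebra"
begin

definition padic_ord_rat :: "nat \<Rightarrow> rat \<Rightarrow> int" where
  "padic_ord_rat p q = (case quotient_of q of (a, b) \<Rightarrow>
      int (multiplicity (int p) a) - int (multiplicity (int p) b))"

definition padic_abs_rat :: "nat \<Rightarrow> rat \<Rightarrow> real" where
  "padic_abs_rat p q = (if q = 0 then 0 else real p powi (- padic_ord_rat p q))"

text \<open>A field K (of characteristic 0) with an absolute value absv is (isometrically,
  uniquely) a copy of Q_p iff absv is a non-archimedean absolute value restricting to the
  p-adic absolute value on Q, Q is dense in K and K is complete.\<close>

definition is_Qp :: "nat \<Rightarrow> ('a::field_char_0 \<Rightarrow> real) \<Rightarrow> bool" where
  "is_Qp p absv \<longleftrightarrow>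
     (\<forall>x. absv x \<ge> 0) \<and> (\<forall>x. absv x = 0 \<longleftrightarrow> x = 0) \<and>
     (\<forall>x y. absv (x * y) = absv x * absv y) \<and>
     (\<forall>x y. absv (x + y) \<le> max (absv x) (absv y)) \<and>
     (\<forall>q. absv (of_rat q) = padic_abs_rat p q) \<and>
     (\<forall>x e. e > 0 \<longrightarrow> (\<exists>q. absv (x - of_rat q) < e)) \<and>
     (\<forall>X::nat \<Rightarrow> 'a. (\<forall>e>0. \<exists>N. \<forall>m\<ge>N. \<forall>n\<ge>N. absv (X m - X n) < e) \<longrightarrow>
        (\<exists>L. \<forall>e>0. \<exists>N. \<forall>n\<ge>N. absv (X n - L) < e))"

definition ordv :: "nat \<Rightarrow> ('a \<Rightarrow> real) \<Rightarrow> 'a \<Rightarrow> real" where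
  "ordv p absv x = - log (real p) (absv x)"

definition norm1 :: "('a::zero \<Rightarrow> real) \<Rightarrow> 'a poly \<Rightarrow> real" where
  "norm1 absv f = Max (insert 0 (absv ` set (coeffs f)))"

text \<open>f^(j)(x) = f(u^(-j)(1+x) - 1).\<close>
definition twist :: "'a::field \<Rightarrow> int \<Rightarrow> 'a poly \<Rightarrow> 'a poly" where
  "twist u j f = pcompose f [: u powi (- j) - 1, u powi (- j) :]"

definition omega :: "nat \<Rightarrow> nat \<Rightarrow> 'a::field poly" where
  "omega p n = [:1, 1:] ^ (p ^ n) - 1"

definition xi :: "nat \<Rightarrow> nat \<Rightarrow> 'a::field poly" where
  "xi p n = (if n = 0 then [:0, of_nat p:] else omega p n div omega p (n - 1))"

definition omegaS :: "nat \<Rightarrow> 'a::field \<Rightarrow> nat \<Rightarrow> int set \<Rightarrow> 'a poly" where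
  "omegaS p u n S = (\<Prod>j\<in>S. twist u j (omega p n))"

definition ellS :: "nat \<Rightarrow> 'a::field \<Rightarrow> nat \<Rightarrow> int set \<Rightarrow> 'a poly" where
  "ellS p u n S = (\<Prod>j\<in>S. smult (1 / of_nat p) (twist u j (xi p n)))"

definition polyinv :: "'a::field poly \<Rightarrow> 'a poly \<Rightarrow> 'a poly" where
  "polyinv P Q = (THE R. degree R < degree Q \<and> Q dvd (R * P - 1))"

definition xi_cond :: "nat \<Rightarrow> 'a::field \<Rightarrow> nat \<Rightarrow> int set \<Rightarrow> int set \<Rightarrow> 'a poly \<Rightarrow> bool" where
  "xi_cond p u n J' J f \<longleftrightarrow>
     degree f < ((p - 1) * card J' + card J) * p ^ (n - 1) \<and>
     (\<forall>j\<in>J'. twist u j (omega p n) dvd (f - smult (1 / of_nat p) (twist u j (xi p n)))) \<and>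
     (\<forall>j\<in>J - J'. twist u j (omega p (n - 1)) dvd (f - 1))"

definition xitilde :: "nat \<Rightarrow> 'a::field \<Rightarrow> nat \<Rightarrow> int set \<Rightarrow> int set \<Rightarrow> 'a poly" where
  "xitilde p u n J' J = (THE f. xi_cond p u n J' J f)"

definition beta_tilde :: "nat \<Rightarrow> nat \<Rightarrow> int" where
  "beta_tilde p s = \<lfloor>(real s - 1) / (real p - 1)\<rfloor>"

text \<open>Power series with coefficients in Z_p (all coefficients of absolute value at most 1).\<close>
definition integral_fps :: "('a \<Rightarrow> real) \<Rightarrow> 'a fps \<Rightarrow> bool" where
  "integral_fps absv h \<longleftrightarrow> (\<forall>k. absv (fps_nth h k) \<le> 1)"

end

(* Substituting y = omega_(n-1)^(a)(x) for a fixed a in J turns every twist at level n - 1 or n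
   into a polynomial of level one in y: omega_(n-1)^(j) becomes the linear polynomial
   w_j (1 + y) - 1 and xi_n^(j) / p becomes g_j(y) = sum_(i<p) (w_j (1 + y))^i / p, where
   w_j = u^((a - j) p^(n-1)) is close to 1.  Hence the interpolating polynomial is
   R(y) * ell_n^(J'), where R is the inverse of G = prod_(J') g_j modulo the product N of the
   linear factors; uniqueness holds since distinct twists of omega_n are comaximal, u not being
   a root of unity.

   The norms are controlled through the multiplicative Gauss norm.  One has
   |ell_n^(J')| = p^|J'|, and |R(y)| >= 1 because R(y) takes the unit value R(0) = 1 / G(0) at
   the root x = u^a - 1 of y.  For the upper bound, every coefficient i of N has valuation at
   least |J| - i, so reducing y^k modulo N gains a factor p per excess degree, while the
   coefficients of 1 / G grow at most like p^floor(i / (p - 1)).  Reducing a truncation of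
   1 / G modulo N gives |R| <= p^floor((|J| - 1) / (p - 1)) for every n; this implies both
   stated upper bounds, and when the exponent vanishes R(y) is a unit of Z_p[[x]]. *)

theory Submission
  imports Defs
begin

lemma sum_powers_one_plus:
  fixes t :: "'b::comm_ring_1"
  shows "(\<Sum>i<n. (1 + t) ^ i) = (\<Sum>k<n. of_nat (n choose Suc k) * t ^ k)"
proof (induction n)
  case (Suc n)
  have binom: "(1 + t) ^ n = (\<Sum>k\<le>n. of_nat (n choose k) * t ^ k)"
    using binomial_ring[of t 1 n] by (simp add: add.commute)
  have "(\<Sum>i<Suc n. (1 + t) ^ i)
      = (\<Sum>k<n. of_nat (n choose Suc k) * t ^ k) + (\<Sum>k\<le>n. of_nat (n choose k) * t ^ k)"
    using Suc binom by simp
  also have "(\<Sum>k<n. of_nat (n choose Suc k) * t ^ k) = (\<Sum>k<Suc n. of_nat (n choose Suc k) * t ^ k)"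
    by (simp add: binomial_eq_0)
  also have "\<dots> + (\<Sum>k\<le>n. of_nat (n choose k) * t ^ k)
      = (\<Sum>k<Suc n. of_nat (Suc n choose Suc k) * t ^ k)"
    by (simp add: lessThan_Suc_atMost sum.distrib[symmetric] algebra_simps)
  finally show ?case .
qed simp

lemma sum_powers_one_plus_split:
  fixes t :: "'b::comm_ring_1"
  assumes "m > 0"
  shows "(\<Sum>i<m. (1 + t) ^ i) = of_nat m + (\<Sum>k\<in>{1..<m}. of_nat (m choose Suc k) * t ^ k)"
  using sum_powers_one_plus[of t m] assms by (simp add: lessThan_atLeast0 sum.atLeast_Suc_lessThan)

lemma smult_sum_right: "smult c (sum f S) = (\<Sum>i\<in>S. smult c (f i))"
  by (induction S rule: infinite_finite_induct) (simp_all add: smult_add_right)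

lemma div_add_le_add:
  fixes a b d :: nat
  assumes "d \<ge> 2" "b \<ge> 1"
  shows "(a + b) div d \<le> a div d + b"
proof -
  have "a mod d < d" "b mod d < d"
    using assms(1) by simp_all
  then have "a mod d + b mod d < 2 * d"
    by linarith
  then have "(a mod d + b mod d) div d < 2"
    using assms(1) by (simp add: div_less_iff_less_mult mult.commute)
  then have "(a mod d + b mod d) div d \<le> 1"
    by simp
  moreover have "b div d \<le> b div 2"
    using assms(1) by (simp add: div_le_mono2)
  moreover have "b div 2 + 1 \<le> b"
    using assms(2) by presburger
  ultimately show ?thesis
    using div_add1_eq[of a b d] by linarith
qed

lemma pcompose_power_left: "pcompose (f ^ k) q = pcompose f q ^ k"
  by (induction k) (simp_all add: pcompose_1 pcompose_mult)

lemma pcompose_dvd_pcompose: "f dvd g \<Longrightarrow> pcompose f q dvd pcompose g q"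
  by (auto simp: dvd_def pcompose_mult)

lemma poly_mod_sum: "sum f S mod N = (\<Sum>i\<in>S. f i mod N)"
  for N :: "'b::field poly"
  by (induction S rule: infinite_finite_induct) (simp_all add: poly_mod_add_left)

lemma poly_mod_as_sum_of_monoms:
  fixes A N :: "'b::field poly"
  shows "A mod N = (\<Sum>k\<le>degree A. smult (coeff A k) (monom 1 k mod N))"
proof -
  have "A = (\<Sum>k\<le>degree A. smult (coeff A k) (monom 1 k))"
    by (simp add: smult_monom flip: poly_as_sum_of_monoms)
  then show ?thesis
    by (metis (no_types, lifting) poly_mod_sum mod_smult_left sum.cong)
qed

lemma degree_linear_power_minus_1:
  fixes c :: "'b::field"
  assumes "c \<noteq> 0" "K \<ge> 1"
  shows "degree ([:c, c:] ^ K - 1) = K" and "coeff ([:c, c:] ^ K - 1) K = c ^ K"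
proof -
  have d: "degree ([:c, c:] ^ K) = K"
    using assms by (simp add: degree_power_eq)
  show co: "coeff ([:c, c:] ^ K - 1) K = c ^ K"
    using lead_coeff_power[of "[:c, c:]" K] d assms by (simp add: coeff_1)
  have "degree ([:c, c:] ^ K - 1) \<le> K"
    using d by (intro degree_diff_le) auto
  moreover have "K \<le> degree ([:c, c:] ^ K - 1)"
    using co assms by (intro le_degree) simp
  ultimately show "degree ([:c, c:] ^ K - 1) = K"
    by simp
qed

lemma polyinv_eqI:
  fixes P Q R :: "'b::field poly"
  assumes "degree R < degree Q" and "Q dvd R * P - 1"
  shows "polyinv P Q = R"
  unfolding polyinv_def
proof (rule the_equality)
  fix R' assume R': "degree R' < degree Q \<and> Q dvd R' * P - 1"
  have "R' - R = (R' * P - 1) * R - (R * P - 1) * R'"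
    by (simp add: algebra_simps)
  then have "Q dvd R' - R"
    using R' assms(2) by (metis dvd_diff dvd_mult2)
  moreover have "degree (R' - R) < degree Q"
    using R' assms(1) degree_diff_le_max[of R' R] by linarith
  ultimately show "R' = R"
    using mod_poly_less[of "R' - R" Q] by simp
qed (use assms in blast)

definition comaximal :: "'b::comm_ring_1 \<Rightarrow> 'b \<Rightarrow> bool" where
  "comaximal A B \<longleftrightarrow> (\<exists>s t. s * A + t * B = 1)"

lemma comaximal_commute: "comaximal A B \<longleftrightarrow> comaximal B A"
  unfolding comaximal_def by (metis add.commute)

lemma comaximal_if_diff_const:
  fixes A B C :: "'b::field poly"
  assumes "A - C * B = [:e:]" and "e \<noteq> 0"
  shows "comaximal A B"
proof -
  have "[:1 / e:] * A + (- [:1 / e:] * C) * B = [:1 / e:] * (A - C * B)"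
    by (simp only: right_diff_distrib mult.assoc) simp
  also have "\<dots> = 1"
    using assms by (simp add: one_pCons)
  finally show ?thesis
    unfolding comaximal_def by blast
qed

lemma comaximal_divisors:
  assumes "comaximal A B" "A' dvd A" "B' dvd B"
  shows "comaximal A' B'"
proof -
  obtain s t k l where "s * A + t * B = 1" "A = A' * k" "B = B' * l"
    using assms unfolding comaximal_def by (auto elim!: dvdE)
  then have "(s * k) * A' + (t * l) * B' = 1"
    by (simp add: algebra_simps)
  then show ?thesis
    unfolding comaximal_def by blast
qed

lemma comaximal_mult_right: "comaximal A B \<Longrightarrow> comaximal A C \<Longrightarrow> comaximal A (B * C)"
proof -
  assume "comaximal A B" "comaximal A C"
  then obtain s t s' t' where "s * A + t * B = 1" "s' * A + t' * C = 1"
    unfolding comaximal_def by blast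
  then have "(s * A + t * B) * (s' * A + t' * C) = 1"
    by simp
  then have "(s * s' * A + s * t' * C + t * B * s') * A + (t * t') * (B * C) = 1"
    by (simp add: algebra_simps)
  then show ?thesis
    unfolding comaximal_def by blast
qed

lemma comaximal_prod_right:
  "(\<And>j. j \<in> S \<Longrightarrow> comaximal A (f j)) \<Longrightarrow> comaximal A (prod f S)"
proof (induction S rule: infinite_finite_induct)
  case (insert x S)
  then show ?case
    by (simp add: comaximal_mult_right)
qed (auto simp: comaximal_def intro: exI[of _ 0])

lemma comaximal_prod_left:
  "(\<And>j. j \<in> S \<Longrightarrow> comaximal (f j) B) \<Longrightarrow> comaximal (prod f S) B"
  using comaximal_prod_right[of S B f] by (simp add: comaximal_commute)

lemma comaximal_mult_dvd:
  assumes "comaximal A B" "A dvd D" "B dvd D"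
  shows "A * B dvd D"
proof -
  obtain s t where st: "s * A + t * B = 1"
    using assms(1) unfolding comaximal_def by blast
  obtain k l where "D = B * k" "D = A * l"
    using assms(2,3) by blast
  then have "D = (s * A + t * B) * D"
    using st by simp
  also have "\<dots> = s * A * (B * k) + t * B * (A * l)"
    using \<open>D = B * k\<close> \<open>D = A * l\<close> by (simp add: algebra_simps)
  also have "\<dots> = (A * B) * (s * k + t * l)"
    by (simp add: algebra_simps)
  finally have "D = (A * B) * (s * k + t * l)" .
  then show ?thesis ..
qed

lemma prod_dvd_if_pairwise_comaximal:
  assumes "finite S"
    and "\<And>j k. j \<in> S \<Longrightarrow> k \<in> S \<Longrightarrow> j \<noteq> k \<Longrightarrow> comaximal (f j) (f k)"
    and "\<And>j. j \<in> S \<Longrightarrow> f j dvd D"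
  shows "prod f S dvd D"
  using assms
proof (induction S rule: finite_induct)
  case (insert x F)
  then have "comaximal (f x) (prod f F)"
    by (intro comaximal_prod_right) auto
  with insert show ?case
    by (simp add: comaximal_mult_dvd)
qed simp

lemma mult_dvd_mult_diff:
  fixes L g F :: "'b::comm_ring_1"
  assumes "L dvd g - 1" "L dvd F * g - 1"
  shows "L * g dvd F * g - g"
proof -
  have "F - 1 = (F * g - 1) - F * (g - 1)"
    by (simp add: algebra_simps)
  then have "L dvd F - 1"
    using assms by (metis dvd_diff dvd_mult)
  then show ?thesis
    by (metis left_diff_distrib' mult_dvd_mono dvd_refl mult_1)
qed

lemma fps_mult_eq_1_nth:
  fixes F H :: "'b::comm_ring_1 fps"
  assumes "F * H = 1" "m > 0"
  shows "F $ 0 * H $ m = - (\<Sum>i = 1..m. F $ i * H $ (m - i))"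
proof -
  have "0 = (F * H) $ m"
    using assms by simp
  also have "\<dots> = F $ 0 * H $ m + (\<Sum>i = 1..m. F $ i * H $ (m - i))"
    unfolding fps_mult_nth using assms(2) by (subst sum.atLeast_Suc_atMost) auto
  finally show ?thesis
    by (simp add: eq_neg_iff_add_eq_0)
qed

lemma monom_Suc_mod:
  fixes N :: "'b::field poly"
  assumes "degree N \<ge> 1"
  shows "monom 1 (Suc k) mod N = pCons 0 (monom 1 k mod N)
    - smult (coeff (monom 1 k mod N) (degree N - 1) / lead_coeff N) N"
proof -
  have "coeff (pCons 0 (monom 1 k mod N)) (degree N) = coeff (monom 1 k mod N) (degree N - 1)"
    using assms by (cases "degree N") simp_all
  then show ?thesis
    using assms by (auto simp: monom_Suc mod_pCons_eq)
qed

lemma twist_omega: "twist u j (omega p m) = [:u powi - j, u powi - j:] ^ (p ^ m) - 1"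
  by (simp add: twist_def omega_def pcompose_diff pcompose_1 pcompose_power_left pcompose_pCons)

lemma xi_eq_sum:
  assumes "n \<ge> 1" and "p \<noteq> 0"
  shows "xi p n = (\<Sum>i<p. ([:1, 1:] ^ (p ^ (n - 1))) ^ i :: 'b::field poly)"
    and "omega p n = omega p (n - 1) * (xi p n :: 'b poly)"
proof -
  have "omega p n = ([:1, 1:] ^ (p ^ (n - 1))) ^ p - (1 :: 'b poly)"
    using assms(1) by (cases n) (simp_all add: omega_def mult.commute flip: power_mult)
  also have "\<dots> = omega p (n - 1) * (\<Sum>i<p. ([:1, 1:] ^ (p ^ (n - 1))) ^ i)"
    by (simp add: power_diff_1_eq omega_def)
  finally have split: "omega p n = omega p (n - 1) * (\<Sum>i<p. ([:1, 1:] ^ (p ^ (n - 1))) ^ i :: 'b poly)" .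
  have "degree ([:1, 1:] ^ (p ^ (n - 1)) :: 'b poly) \<noteq> 0"
    using assms(2) by (simp add: degree_linear_power)
  then have "omega p (n - 1) \<noteq> (0 :: 'b poly)"
    by (auto simp: omega_def)
  with split show "xi p n = (\<Sum>i<p. ([:1, 1:] ^ (p ^ (n - 1))) ^ i :: 'b poly)"
    using assms(1) by (simp add: xi_def)
  with split show "omega p n = omega p (n - 1) * (xi p n :: 'b poly)"
    by simp
qed

lemma omegaS_div_dvd_ellS:
  fixes u :: "'b::field"
  assumes "finite S" "n \<ge> 1" "p \<noteq> 0" "u \<noteq> 0"
  shows "(omegaS p u n S div omegaS p u (n - 1) S) dvd ellS p u n S"
proof -
  have "twist u j (omega p (n - 1)) \<noteq> 0" for j
  proof -
    have "degree (twist u j (omega p (n - 1)) :: 'b poly) = p ^ (n - 1)"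
      using assms(3,4) degree_linear_power_minus_1(1)[of "u powi - j" "p ^ (n - 1)"]
      by (simp add: twist_omega)
    then show ?thesis
      using assms(3) by (metis degree_0 power_eq_0_iff)
  qed
  moreover have "omegaS p u n S = omegaS p u (n - 1) S * (\<Prod>j\<in>S. twist u j (xi p n))"
    using xi_eq_sum(2)[OF assms(2,3), where 'b = 'b]
    by (simp add: omegaS_def twist_def pcompose_mult prod.distrib)
  ultimately have "omegaS p u n S div omegaS p u (n - 1) S = (\<Prod>j\<in>S. twist u j (xi p n))"
    using assms(1) by (simp add: omegaS_def)
  moreover have "ellS p u n S = smult ((1 / of_nat p) ^ card S) (\<Prod>j\<in>S. twist u j (xi p n))"
    by (simp add: ellS_def prod_smult)
  ultimately show ?thesis
    by (simp add: dvd_smult)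
qed

text \<open>The polynomials \<omega>_0 and \<xi>_1 / p evaluated at w (1 + y) - 1.\<close>

definition shifted_omega0 :: "'b::field \<Rightarrow> 'b poly" where
  "shifted_omega0 w = [:w - 1, w:]"

definition shifted_ell1 :: "nat \<Rightarrow> 'b::field \<Rightarrow> 'b poly" where
  "shifted_ell1 p w = smult (1 / of_nat p) (\<Sum>i<p. [:w, w:] ^ i)"

lemma shifted_ell1_eq_sum:
  "shifted_ell1 p w
     = (\<Sum>k<p. smult (of_nat (p choose Suc k) / of_nat p) (shifted_omega0 w ^ k))"
proof -
  have "[:w, w:] = 1 + shifted_omega0 w"
    by (simp add: shifted_omega0_def one_pCons)
  then have "(\<Sum>i<p. [:w, w:] ^ i) = (\<Sum>k<p. of_nat (p choose Suc k) * shifted_omega0 w ^ k)"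
    using sum_powers_one_plus[of "shifted_omega0 w" p] by simp
  then show ?thesis
    by (simp add: shifted_ell1_def smult_sum_right of_nat_poly)
qed

lemma poly_shifted_ell1: "poly (shifted_ell1 p w) z = (\<Sum>i<p. (w * (1 + z)) ^ i) / of_nat p"
  by (simp add: shifted_ell1_def poly_sum algebra_simps)

lemma degree_shifted_ell1: "degree (shifted_ell1 p w) \<le> p - 1"
proof -
  have "degree ([:w, w:] ^ i) \<le> p - 1" if "i < p" for i
    using degree_power_le[of "[:w, w:]" i] that by (auto simp: degree_pCons_eq_if split: if_splits)
  then have "degree (\<Sum>i<p. [:w, w:] ^ i) \<le> p - 1"
    by (intro degree_sum_le) auto
  then show ?thesis
    unfolding shifted_ell1_def using degree_smult_le order_trans by blast
qed

lemma degree_prod_shifted_ell1: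
  assumes "finite K"
  shows "degree (\<Prod>k\<in>K. shifted_ell1 p (w k)) \<le> card K * (p - 1)"
proof -
  have "degree (\<Prod>k\<in>K. shifted_ell1 p (w k)) \<le> (\<Sum>k\<in>K. degree (shifted_ell1 p (w k)))"
    using degree_prod_sum_le[OF assms] by (simp add: o_def)
  also have "\<dots> \<le> (\<Sum>k\<in>K. p - 1)"
    by (intro sum_mono degree_shifted_ell1)
  finally show ?thesis
    by simp
qed

section \<open>Non-archimedean absolute values and the Gauss norm\<close>

locale nonarch_abs =
  fixes absv :: "'a::field \<Rightarrow> real"
  assumes absv_nonneg [simp]: "absv x \<ge> 0"
    and absv_eq_0_iff [simp]: "absv x = 0 \<longleftrightarrow> x = 0"
    and absv_mult: "absv (x * y) = absv x * absv y"
    and absv_add_le_max: "absv (x + y) \<le> max (absv x) (absv y)"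
begin

lemma absv_0 [simp]: "absv 0 = 0"
  by simp

lemma absv_1 [simp]: "absv 1 = 1"
proof -
  have "absv 1 * absv 1 = absv 1 * 1"
    by (simp flip: absv_mult)
  then show ?thesis
    by (subst (asm) mult_left_cancel) simp_all
qed

lemma absv_minus [simp]: "absv (- x) = absv x"
proof -
  have "absv (-1) * absv (-1) = 1"
    by (simp flip: absv_mult)
  then have "(absv (-1) - 1) * (absv (-1) + 1) = 0"
    by (simp add: algebra_simps)
  then have "absv (-1) = 1"
    using absv_nonneg[of "-1"] by simp
  then show ?thesis
    using absv_mult[of "-1" x] by simp
qed

lemma absv_diff_commute: "absv (x - y) = absv (y - x)"
  by (metis absv_minus minus_diff_eq)

lemma absv_add_le: "absv x \<le> B \<Longrightarrow> absv y \<le> B \<Longrightarrow> absv (x + y) \<le> B"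
  using absv_add_le_max[of x y] by simp

lemma absv_diff_le: "absv x \<le> B \<Longrightarrow> absv y \<le> B \<Longrightarrow> absv (x - y) \<le> B"
  using absv_add_le[of x B "- y"] by simp

lemma absv_add_less: "absv x < B \<Longrightarrow> absv y < B \<Longrightarrow> absv (x + y) < B"
  using absv_add_le_max[of x y] by simp

lemma absv_add_eq_left: "absv y < absv x \<Longrightarrow> absv (x + y) = absv x"
  using absv_add_le_max[of x y] absv_add_le_max[of "x + y" "- y"] by (simp add: max_def split: if_splits)

lemma absv_power: "absv (x ^ k) = absv x ^ k"
  by (induction k) (simp_all add: absv_mult)

lemma absv_inverse: "absv (inverse x) = inverse (absv x)"
proof (cases "x = 0")
  case False
  then have "absv x * absv (inverse x) = 1"
    by (simp flip: absv_mult)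
  then show ?thesis
    by (rule inverse_unique[symmetric])
qed simp

lemma absv_divide: "absv (x / y) = absv x / absv y"
  by (simp add: divide_inverse absv_mult absv_inverse)

lemma absv_prod: "absv (prod f S) = (\<Prod>i\<in>S. absv (f i))"
  by (induction S rule: infinite_finite_induct) (simp_all add: absv_mult)

lemma absv_sum_le:
  "(\<And>i. i \<in> S \<Longrightarrow> absv (f i) \<le> B) \<Longrightarrow> B \<ge> 0 \<Longrightarrow> absv (sum f S) \<le> B"
  by (induction S rule: infinite_finite_induct) (simp_all add: absv_add_le)

lemma absv_sum_less:
  "(\<And>i. i \<in> S \<Longrightarrow> absv (f i) < B) \<Longrightarrow> B > 0 \<Longrightarrow> absv (sum f S) < B"
  by (induction S rule: infinite_finite_induct) (simp_all add: absv_add_less)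

lemma absv_of_nat_le: "absv (of_nat k) \<le> 1"
  by (induction k) (simp_all add: absv_add_le)

lemma absv_of_int_le: "absv (of_int k) \<le> 1"
  by (cases k rule: int_cases) (simp_all add: absv_of_nat_le del: of_nat_Suc)

lemma norm1_le_iff: "norm1 absv f \<le> B \<longleftrightarrow> (\<forall>i. absv (coeff f i) \<le> B)"
proof -
  have "(\<forall>i. absv (coeff f i) \<le> B) \<longleftrightarrow> (\<forall>a\<in>range (coeff f). absv a \<le> B)"
    by auto
  then show ?thesis
    by (simp add: norm1_def range_coeff)
qed

lemma coeff_le_norm1: "absv (coeff f i) \<le> norm1 absv f"
  using norm1_le_iff by blast

lemma norm1_nonneg: "norm1 absv f \<ge> 0"
  using coeff_le_norm1[of f 0] absv_nonneg order_trans by blast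

lemma norm1_attained: "\<exists>i. absv (coeff f i) = norm1 absv f"
proof -
  have "insert 0 (absv ` set (coeffs f)) = absv ` range (coeff f)"
    by (simp add: range_coeff)
  moreover have "Max (absv ` range (coeff f)) \<in> absv ` range (coeff f)"
    by (intro Max_in) (auto simp: range_coeff)
  ultimately show ?thesis
    by (auto simp: norm1_def)
qed

lemma norm1_eq_0_iff [simp]: "norm1 absv f = 0 \<longleftrightarrow> f = 0"
proof
  assume "norm1 absv f = 0"
  then have "coeff f i = 0" for i
    using coeff_le_norm1[of f i] absv_nonneg[of "coeff f i"] by simp
  then show "f = 0"
    by (simp add: poly_eq_iff)
qed (simp add: norm1_def)

lemma norm1_1 [simp]: "norm1 absv 1 = 1"
  by (simp add: norm1_def)

lemma norm1_add_le: "norm1 absv f \<le> B \<Longrightarrow> norm1 absv g \<le> B \<Longrightarrow> norm1 absv (f + g) \<le> B"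
  by (simp add: norm1_le_iff absv_add_le)

lemma norm1_diff_le: "norm1 absv f \<le> B \<Longrightarrow> norm1 absv g \<le> B \<Longrightarrow> norm1 absv (f - g) \<le> B"
  by (simp add: norm1_le_iff absv_diff_le)

lemma norm1_sum_le:
  "(\<And>i. i \<in> S \<Longrightarrow> norm1 absv (f i) \<le> B) \<Longrightarrow> B \<ge> 0 \<Longrightarrow> norm1 absv (sum f S) \<le> B"
  by (simp add: norm1_le_iff coeff_sum absv_sum_le)

lemma norm1_smult: "norm1 absv (smult c f) = absv c * norm1 absv f"
proof (rule antisym)
  show "norm1 absv (smult c f) \<le> absv c * norm1 absv f"
    by (simp add: norm1_le_iff absv_mult coeff_le_norm1 mult_left_mono)
  obtain i where "absv (coeff f i) = norm1 absv f"
    using norm1_attained by blast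
  then show "absv c * norm1 absv f \<le> norm1 absv (smult c f)"
    using coeff_le_norm1[of "smult c f" i] by (simp add: absv_mult)
qed

lemma norm1_mult_le: "norm1 absv (f * g) \<le> norm1 absv f * norm1 absv g"
  unfolding norm1_le_iff coeff_mult
proof (intro allI absv_sum_le)
  fix n i
  show "absv (coeff f i * coeff g (n - i)) \<le> norm1 absv f * norm1 absv g"
    unfolding absv_mult by (intro mult_mono coeff_le_norm1 norm1_nonneg absv_nonneg)
qed (intro mult_nonneg_nonneg norm1_nonneg)

lemma norm1_attained_first:
  "\<exists>i. absv (coeff f i) = norm1 absv f \<and> (\<forall>j<i. absv (coeff f j) < norm1 absv f)"
proof -
  obtain i where "absv (coeff f i) = norm1 absv f" "\<forall>j<i. absv (coeff f j) \<noteq> norm1 absv f"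
    using norm1_attained[of f] exists_least_iff[of "\<lambda>i. absv (coeff f i) = norm1 absv f"] by blast
  then show ?thesis
    using coeff_le_norm1[of f] by (auto simp: order.strict_iff_order)
qed

text \<open>Gauss's lemma: at the sum of the first indices where f and g attain their norms, the
  coefficient of f g is dominated by a single term.\<close>

lemma absv_coeff_mult_first_maxima:
  assumes "f \<noteq> 0" "g \<noteq> 0"
    and f: "absv (coeff f i0) = norm1 absv f" "\<And>i. i < i0 \<Longrightarrow> absv (coeff f i) < norm1 absv f"
    and g: "absv (coeff g j0) = norm1 absv g" "\<And>j. j < j0 \<Longrightarrow> absv (coeff g j) < norm1 absv g"
  shows "absv (coeff (f * g) (i0 + j0)) = norm1 absv f * norm1 absv g"
proof -
  define A B m where "A = norm1 absv f" and "B = norm1 absv g" and "m = i0 + j0"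
  have A0: "A > 0" and B0: "B > 0"
    using assms(1,2) norm1_nonneg[of f] norm1_nonneg[of g] by (simp_all add: A_def B_def less_le)
  have split: "coeff (f * g) m
      = coeff f i0 * coeff g j0 + (\<Sum>i\<in>{..m} - {i0}. coeff f i * coeff g (m - i))"
    unfolding coeff_mult m_def by (subst sum.remove[of _ i0]) auto
  have "absv (coeff f i) * absv (coeff g (m - i)) < A * B" if "i \<in> {..m} - {i0}" for i
  proof (cases "i < i0")
    case True
    have "absv (coeff f i) * absv (coeff g (m - i)) \<le> absv (coeff f i) * B"
      by (intro mult_left_mono) (simp_all add: B_def coeff_le_norm1)
    also have "\<dots> < A * B"
      using f(2)[OF True] B0 by (simp add: A_def)
    finally show ?thesis .
  next
    case False
    with that have "m - i < j0" by (auto simp: m_def)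
    have "absv (coeff f i) * absv (coeff g (m - i)) \<le> A * absv (coeff g (m - i))"
      by (intro mult_right_mono) (simp_all add: A_def coeff_le_norm1)
    also have "\<dots> < A * B"
      using g(2)[OF \<open>m - i < j0\<close>] A0 by (simp add: B_def)
    finally show ?thesis .
  qed
  then have "absv (\<Sum>i\<in>{..m} - {i0}. coeff f i * coeff g (m - i)) < A * B"
    using A0 B0 by (intro absv_sum_less) (auto simp: absv_mult)
  then show ?thesis
    unfolding split m_def[symmetric] A_def[symmetric] B_def[symmetric] using f(1) g(1)
    by (subst absv_add_eq_left) (simp_all add: absv_mult A_def B_def)
qed

lemma norm1_mult: "norm1 absv (f * g) = norm1 absv f * norm1 absv g"
proof (cases "f = 0 \<or> g = 0")
  case False
  obtain i0 j0 where "absv (coeff f i0) = norm1 absv f" "\<forall>i<i0. absv (coeff f i) < norm1 absv f"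
    "absv (coeff g j0) = norm1 absv g" "\<forall>j<j0. absv (coeff g j) < norm1 absv g"
    using norm1_attained_first[of f] norm1_attained_first[of g] by blast
  then have "norm1 absv f * norm1 absv g \<le> norm1 absv (f * g)"
    using False absv_coeff_mult_first_maxima coeff_le_norm1 by metis
  with norm1_mult_le show ?thesis
    by (rule antisym)
qed auto

lemma norm1_prod: "norm1 absv (prod f S) = (\<Prod>i\<in>S. norm1 absv (f i))"
  by (induction S rule: infinite_finite_induct) (simp_all add: norm1_mult)

lemma norm1_power: "norm1 absv (f ^ k) = norm1 absv f ^ k"
  by (induction k) (simp_all add: norm1_mult)

lemma norm1_pcompose_le:
  assumes "norm1 absv q \<le> 1"
  shows "norm1 absv (pcompose f q) \<le> norm1 absv f"
proof (induction f rule: pCons_induct)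
  case (pCons c f)
  have "norm1 absv f \<le> norm1 absv (pCons c f)"
    by (metis coeff_le_norm1 coeff_pCons_Suc norm1_le_iff)
  moreover have "norm1 absv (q * pcompose f q) \<le> norm1 absv (pcompose f q)"
    using norm1_mult_le[of q "pcompose f q"] assms
      mult_left_le_one_le[of "norm1 absv (pcompose f q)" "norm1 absv q"]
    by (simp add: norm1_nonneg)
  ultimately have "norm1 absv (q * pcompose f q) \<le> norm1 absv (pCons c f)"
    using pCons.IH by linarith
  moreover have "norm1 absv [:c:] \<le> norm1 absv (pCons c f)"
    using coeff_le_norm1[of "pCons c f" 0] norm1_nonneg[of "pCons c f"]
    by (simp add: norm1_le_iff coeff_pCons split: nat.splits)
  ultimately show ?case
    by (simp add: pcompose_pCons norm1_add_le)
qed simp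

lemma absv_poly_le_norm1:
  assumes "absv x \<le> 1"
  shows "absv (poly f x) \<le> norm1 absv f"
  unfolding poly_altdef
proof (rule absv_sum_le)
  fix i
  have "absv (coeff f i) * absv x ^ i \<le> norm1 absv f * 1"
    using assms by (intro mult_mono) (simp_all add: coeff_le_norm1 power_le_one norm1_nonneg)
  then show "absv (coeff f i * x ^ i) \<le> norm1 absv f"
    by (simp add: absv_mult absv_power)
qed (rule norm1_nonneg)

lemma absv_coeff_0_eq_1:
  assumes "norm1 absv F \<le> 1" "absv x < 1" "absv (poly F x) = 1"
  shows "absv (coeff F 0) = 1"
proof -
  obtain c F' where F: "F = pCons c F'"
    by (cases F) auto
  have "norm1 absv F' \<le> 1" "absv c \<le> 1"
    using assms(1) unfolding F norm1_le_iff by (metis coeff_pCons_Suc, metis coeff_pCons_0)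
  then have "absv (poly F' x) \<le> 1"
    using absv_poly_le_norm1[of x F'] assms(2) by simp
  then have "absv x * absv (poly F' x) \<le> absv x"
    by (simp add: mult_right_le_one_le)
  then have "absv (x * poly F' x) < 1"
    using assms(2) by (simp add: absv_mult)
  then show ?thesis
    using assms(3) \<open>absv c \<le> 1\<close> absv_add_less[of c 1 "x * poly F' x"] by (fastforce simp: F)
qed

end

locale padic_abs = nonarch_abs absv
  for absv :: "'a::field \<Rightarrow> real" +
  fixes p :: nat
  assumes prime_p: "prime p" and odd_p: "odd p"
    and absv_of_p: "absv (of_nat p) = 1 / real p"
begin

lemma p_gt_2: "p > 2"
  using prime_ge_2_nat[OF prime_p] odd_p by (cases "p = 2") auto

lemma absv_of_nat_coprime:
  assumes "\<not> p dvd k"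
  shows "absv (of_nat k) = 1"
proof -
  have "coprime (int p) (int k)"
    using assms prime_p by (simp add: prime_imp_coprime)
  then obtain a b where "a * int p + b * int k = 1"
    by (metis bezout_coefficients_fst_snd coprime_iff_gcd_eq_1)
  then have one: "(1::'a) = of_int a * of_nat p + of_int b * of_nat k"
    by (metis of_int_1 of_int_add of_int_mult of_int_of_nat_eq)
  have "absv (of_int a * of_nat p :: 'a) \<le> 1 / real p"
    using absv_of_int_le[of a] absv_of_p p_gt_2 by (simp add: absv_mult divide_right_mono)
  also have "\<dots> < 1"
    using p_gt_2 by simp
  finally have "absv (of_int b * of_nat k :: 'a) \<ge> 1"
    using one absv_add_less[of "of_int a * of_nat p" 1 "of_int b * of_nat k"]
    by (metis absv_1 less_irrefl not_le)
  moreover have "absv (of_int b * of_nat k :: 'a) \<le> absv (of_nat k :: 'a)"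
    using absv_of_int_le[of b] by (simp add: absv_mult mult_left_le_one_le)
  ultimately show ?thesis
    using absv_of_nat_le[of k] by linarith
qed

lemma absv_choose_prime_le:
  assumes "0 < k" "k < p"
  shows "absv (of_nat (p choose k) :: 'a) \<le> 1 / real p"
proof -
  have "p dvd p choose k"
    using assms prime_p by (intro dvd_choose_prime) auto
  then obtain m where "p choose k = p * m" ..
  then show ?thesis
    using absv_of_nat_le[of m] absv_of_p by (simp add: absv_mult divide_right_mono)
qed

lemma of_nat_p_neq_0: "(of_nat p :: 'a) \<noteq> 0"
proof
  assume "(of_nat p :: 'a) = 0"
  then have "1 / real p = 0"
    using absv_of_p by simp
  then show False
    using p_gt_2 by simp
qed

lemma absv_choose_div_p_le:
  assumes "0 < k" "k \<le> p"
  shows "absv (of_nat (p choose k) / of_nat p :: 'a) \<le> real p powi (if k = p then 1 else 0)"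
proof (cases "k = p")
  case True
  then show ?thesis
    using absv_of_p p_gt_2 by (simp add: absv_divide)
next
  case False
  then have "absv (of_nat (p choose k) :: 'a) \<le> 1 / real p"
    using absv_choose_prime_le assms by simp
  then show ?thesis
    using False p_gt_2 by (simp add: absv_divide absv_of_p) (simp add: field_simps)
qed

definition near_one :: "'a \<Rightarrow> bool" where
  "near_one w \<longleftrightarrow> absv (w - 1) \<le> 1 / real p"

lemma absv_near_one:
  assumes "near_one w"
  shows "absv w = 1"
proof -
  have "absv (w - 1) < absv 1"
    using assms p_gt_2 by (simp add: near_one_def le_less_trans)
  then show ?thesis
    using absv_add_eq_left[of "w - 1" 1] by simp
qed

lemma near_one_1: "near_one 1"
  by (simp add: near_one_def)

lemma near_one_mult: "near_one a \<Longrightarrow> near_one b \<Longrightarrow> near_one (a * b)"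
proof -
  assume a: "near_one a" and b: "near_one b"
  have "a * b - 1 = a * (b - 1) + (a - 1)"
    by (simp add: algebra_simps)
  moreover have "absv (a * (b - 1) + (a - 1)) \<le> 1 / real p"
    using a b absv_near_one[OF a] by (intro absv_add_le) (simp_all add: near_one_def absv_mult)
  ultimately show ?thesis
    unfolding near_one_def by (simp only:)
qed

lemma near_one_inverse: "near_one a \<Longrightarrow> near_one (inverse a)"
proof -
  assume a: "near_one a"
  then have "a \<noteq> 0"
    using absv_near_one by fastforce
  then have "inverse a - 1 = (1 - a) * inverse a"
    by (simp add: field_simps)
  then show ?thesis
    using a absv_near_one[OF a]
    by (simp add: near_one_def absv_mult absv_inverse absv_diff_commute)
qed

lemma near_one_power: "near_one a \<Longrightarrow> near_one (a ^ k)"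
  by (induction k) (simp_all add: near_one_1 near_one_mult)

lemma near_one_power_int: "near_one a \<Longrightarrow> near_one (a powi k)"
  by (simp add: power_int_def near_one_power near_one_inverse flip: power_inverse)

lemma absv_sum_powers_near_one:
  assumes "near_one w"
  shows "absv (\<Sum>i<p. w ^ i) = 1 / real p"
proof -
  define t where "t = w - 1"
  have t: "absv t \<le> 1 / real p"
    using assms by (simp add: near_one_def t_def)
  have "absv (of_nat (p choose Suc k) * t ^ k) < 1 / real p" if k: "k \<in> {1..<p}" for k
  proof -
    have tk: "absv t ^ k \<le> (1 / real p) ^ k"
      using t by (intro power_mono) auto
    have "absv (of_nat (p choose Suc k) :: 'a) * absv t ^ k \<le> (1 / real p) ^ 2"
    proof (cases "k = 1")
      case True
      then have "absv (of_nat (p choose Suc k) :: 'a) \<le> 1 / real p"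
        using absv_choose_prime_le[of "Suc k"] p_gt_2 by simp
      then have "absv (of_nat (p choose Suc k) :: 'a) * absv t ^ k \<le> (1 / real p) * (1 / real p)"
        using t True by (intro mult_mono) auto
      then show ?thesis
        by (simp add: power2_eq_square)
    next
      case False
      then have "(1 / real p) ^ k \<le> (1 / real p) ^ 2"
        using k p_gt_2 by (intro power_decreasing) auto
      moreover have "absv (of_nat (p choose Suc k) :: 'a) * absv t ^ k \<le> 1 * (1 / real p) ^ k"
        using absv_of_nat_le[of "p choose Suc k"] tk by (intro mult_mono) auto
      ultimately show ?thesis
        by simp
    qed
    also have "\<dots> < 1 / real p"
      using p_gt_2 by (simp add: field_simps power2_eq_square)
    finally show ?thesis
      by (simp add: absv_mult absv_power)
  qed
  then have "absv (\<Sum>k\<in>{1..<p}. of_nat (p choose Suc k) * t ^ k) < absv (of_nat p :: 'a)"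
    unfolding absv_of_p using p_gt_2 by (intro absv_sum_less) auto
  then show ?thesis
    using sum_powers_one_plus_split[of p t] p_gt_2 by (simp add: t_def absv_add_eq_left absv_of_p)
qed

lemma absv_sum_powers_coprime:
  assumes "absv (u - 1) < 1" and "\<not> p dvd m"
  shows "absv (\<Sum>i<m. u ^ i) = 1"
proof -
  define t where "t = u - 1"
  have "absv (of_nat (m choose Suc k) * t ^ k :: 'a) < 1" if "k \<in> {1..<m}" for k
  proof -
    have "absv (of_nat (m choose Suc k) :: 'a) * absv t ^ k \<le> absv t ^ k"
      using absv_of_nat_le by (intro mult_left_le_one_le) auto
    also have "\<dots> < 1"
      using assms(1) that by (simp add: t_def power_less_one_iff)
    finally show ?thesis
      by (simp add: absv_mult absv_power)
  qed
  then have "absv (\<Sum>k\<in>{1..<m}. of_nat (m choose Suc k) * t ^ k) < absv (of_nat m :: 'a)"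
    unfolding absv_of_nat_coprime[OF assms(2)] by (intro absv_sum_less) auto
  moreover have "m > 0"
    using assms(2) by (rule contrapos_np) simp
  ultimately show ?thesis
    using sum_powers_one_plus_split[of m t] absv_of_nat_coprime[OF assms(2)]
    by (simp add: t_def absv_add_eq_left)
qed

text \<open>The only root of unity near 1 is 1: by the two previous lemmas, u^m - 1 is u - 1 times a
  unit when p does not divide m, and u^(m/p) - 1 times a nonzero factor when it does.\<close>

lemma power_neq_1_if_near_one:
  assumes u: "near_one u" "u \<noteq> 1" and "m > 0"
  shows "u ^ m \<noteq> 1"
  using \<open>m > 0\<close>
proof (induction m rule: less_induct)
  case (less m)
  show ?case
  proof (cases "p dvd m")
    case True
    then obtain m1 where m1: "m = p * m1" ..
    then have "u ^ m1 \<noteq> 1"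
      using less p_gt_2 by auto
    moreover have "absv (\<Sum>i<p. (u ^ m1) ^ i) \<noteq> 0"
      using absv_sum_powers_near_one[OF near_one_power[OF u(1), of m1]] p_gt_2 by simp
    then have "(\<Sum>i<p. (u ^ m1) ^ i) \<noteq> 0"
      by auto
    ultimately show ?thesis
      using power_diff_1_eq[of "u ^ m1" p] by (auto simp: m1 power_mult mult.commute)
  next
    case False
    have "absv (u - 1) < 1"
      using u(1) p_gt_2 by (simp add: near_one_def le_less_trans)
    then have "(\<Sum>i<m. u ^ i) \<noteq> 0"
      using absv_sum_powers_coprime[OF _ False] by fastforce
    then show ?thesis
      using u(2) power_diff_1_eq[of u m] by auto
  qed
qed

lemma power_int_neq_1_if_near_one:
  assumes "near_one u" "u \<noteq> 1" "m \<noteq> 0"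
  shows "u powi m \<noteq> 1"
proof (cases "m > 0")
  case True
  then show ?thesis
    using power_neq_1_if_near_one[OF assms(1,2), of "nat m"] by (simp add: power_int_def)
next
  case False
  then show ?thesis
    using power_neq_1_if_near_one[OF assms(1,2), of "nat (- m)"] assms(3)
    by (simp add: power_int_def power_inverse)
qed

end

lemma padic_abs_if_is_Qp:
  fixes absv :: "'a::field_char_0 \<Rightarrow> real"
  assumes "prime p" "odd p" "is_Qp p absv"
  shows "padic_abs absv p"
proof -
  have "quotient_of (of_nat p :: rat) = (int p, 1)"
    using quotient_of_int[of "int p"] by simp
  moreover have "multiplicity (int p) (int p) = 1"
    using assms(1) by (intro multiplicity_self) (auto simp: prime_gt_0_nat)
  ultimately have "padic_abs_rat p (of_nat p) = real p powi (-1)"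
    using assms(1) by (simp add: padic_abs_rat_def padic_ord_rat_def prime_gt_0_nat)
  moreover have "absv (of_rat (of_nat p)) = padic_abs_rat p (of_nat p)"
    using assms(3) by (simp only: is_Qp_def)
  ultimately have "absv (of_nat p) = 1 / real p"
    by (simp add: power_int_minus inverse_eq_divide)
  with assms show ?thesis
    by unfold_locales (auto simp: is_Qp_def)
qed

context padic_abs
begin

definition fps_bounded :: "(nat \<Rightarrow> int) \<Rightarrow> 'a fps \<Rightarrow> bool" where
  "fps_bounded e F \<longleftrightarrow> (\<forall>i. absv (F $ i) \<le> real p powi e i)"

lemma p_powi_add: "real p powi (a + b) = real p powi a * real p powi b"
  using p_gt_2 by (simp add: power_int_add)

lemma p_powi_mono: "a \<le> b \<Longrightarrow> real p powi a \<le> real p powi b"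
  using p_gt_2 by (intro power_int_increasing) auto

lemma p_powi_pos: "real p powi a > 0"
  using p_gt_2 by simp

lemma fps_bounded_mono: "fps_bounded e F \<Longrightarrow> (\<And>i. e i \<le> e' i) \<Longrightarrow> fps_bounded e' F"
  unfolding fps_bounded_def using p_powi_mono order_trans by blast

lemma fps_bounded_add: "fps_bounded e F \<Longrightarrow> fps_bounded e G \<Longrightarrow> fps_bounded e (F + G)"
  by (simp add: fps_bounded_def absv_add_le)

lemma fps_bounded_0: "fps_bounded e 0"
  by (simp add: fps_bounded_def less_imp_le[OF p_powi_pos])

lemma fps_bounded_sum: "(\<And>k. k \<in> S \<Longrightarrow> fps_bounded e (F k)) \<Longrightarrow> fps_bounded e (sum F S)"
  by (induction S rule: infinite_finite_induct) (simp_all add: fps_bounded_add fps_bounded_0)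

lemma fps_bounded_1: "e 0 \<ge> 0 \<Longrightarrow> fps_bounded e 1"
  using p_powi_mono[of 0 "e 0"] by (auto simp: fps_bounded_def less_imp_le[OF p_powi_pos])

lemma fps_bounded_mult:
  assumes "fps_bounded e1 F" "fps_bounded e2 G" "\<And>i j. e1 i + e2 j \<le> e3 (i + j)"
  shows "fps_bounded e3 (F * G)"
  unfolding fps_bounded_def fps_mult_nth
proof (intro allI absv_sum_le)
  fix n i :: nat assume "i \<in> {0..n}"
  then have "real p powi e1 i * real p powi e2 (n - i) \<le> real p powi e3 n"
    using assms(3)[of i "n - i"] by (simp add: p_powi_mono flip: p_powi_add)
  moreover have "absv (F $ i) * absv (G $ (n - i)) \<le> real p powi e1 i * real p powi e2 (n - i)"
    using assms(1,2) by (intro mult_mono) (auto simp: fps_bounded_def)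
  ultimately show "absv (F $ i * G $ (n - i)) \<le> real p powi e3 n"
    by (simp add: absv_mult)
qed (simp add: less_imp_le[OF p_powi_pos])

lemma fps_bounded_prod:
  assumes "\<And>k. k \<in> S \<Longrightarrow> fps_bounded e (F k)" "\<And>i j. e i + e j \<le> e (i + j)" "e 0 \<ge> 0"
  shows "fps_bounded e (prod F S)"
  using assms(1)
proof (induction S rule: infinite_finite_induct)
  case (insert x S)
  then show ?case
    using fps_bounded_mult[of e "F x" e "prod F S" e] assms(2) by simp
qed (simp_all add: fps_bounded_1 assms(3))

lemma fps_bounded_inverse:
  assumes "fps_bounded e F" "absv (F $ 0) = 1" "e 0 \<ge> 0" "\<And>i j. e i + e j \<le> e (i + j)"
  shows "fps_bounded e (inverse F)"
proof -
  define H where "H = inverse F"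
  have FH: "F * H = 1"
    using assms(2) by (auto simp: H_def intro: inverse_mult_eq_1')
  have "absv (H $ m) \<le> real p powi e m" for m
  proof (induction m rule: less_induct)
    case (less m)
    show ?case
    proof (cases "m = 0")
      case True
      have "absv (F $ 0) * absv (H $ 0) = 1"
        using arg_cong[OF FH, of "\<lambda>X. absv (X $ 0)"] by (simp add: absv_mult)
      then show ?thesis
        using True assms(2) p_powi_mono[OF assms(3)] by simp
    next
      case False
      then have "F $ 0 * H $ m = - (\<Sum>i = 1..m. F $ i * H $ (m - i))"
        using fps_mult_eq_1_nth[OF FH] by simp
      then have "absv (H $ m) = absv (\<Sum>i = 1..m. F $ i * H $ (m - i))"
        using assms(2) by (metis absv_minus absv_mult mult_1)
      also have "\<dots> \<le> real p powi e m"
      proof (rule absv_sum_le)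
        fix i assume i: "i \<in> {1..m}"
        have "absv (F $ i) * absv (H $ (m - i)) \<le> real p powi e i * real p powi e (m - i)"
          using assms(1) less.IH[of "m - i"] i by (intro mult_mono) (auto simp: fps_bounded_def)
        also have "\<dots> \<le> real p powi e m"
          using assms(4)[of i "m - i"] i by (simp add: p_powi_mono flip: p_powi_add)
        finally show "absv (F $ i * H $ (m - i)) \<le> real p powi e m"
          by (simp add: absv_mult)
      qed (simp add: less_imp_le[OF p_powi_pos])
      finally show ?thesis .
    qed
  qed
  then show ?thesis
    by (simp add: fps_bounded_def H_def)
qed

lemma integral_fps_iff: "integral_fps absv F \<longleftrightarrow> fps_bounded (\<lambda>_. 0) F"
  by (simp add: integral_fps_def fps_bounded_def)

lemma unit_integral_fps:
  assumes "norm1 absv F \<le> 1" "absv (coeff F 0) = 1"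
  shows "integral_fps absv (fps_of_poly F)" "integral_fps absv (inverse (fps_of_poly F))"
    and "fps_of_poly F * inverse (fps_of_poly F) = 1"
proof -
  show F: "integral_fps absv (fps_of_poly F)"
    using assms(1) by (simp add: integral_fps_def norm1_le_iff)
  show "integral_fps absv (inverse (fps_of_poly F))"
    using F assms(2) unfolding integral_fps_iff by (intro fps_bounded_inverse) auto
  show "fps_of_poly F * inverse (fps_of_poly F) = 1"
    using assms(2) by (intro inverse_mult_eq_1') auto
qed

definition beta :: "nat \<Rightarrow> int" where
  "beta i = int (i div (p - 1))"

lemma beta_0 [simp]: "beta 0 = 0"
  by (simp add: beta_def)

lemma beta_nonneg: "beta i \<ge> 0"
  by (simp add: beta_def)

lemma beta_superadditive: "beta i + beta j \<le> beta (i + j)"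
  unfolding beta_def using div_add1_eq[of i j "p - 1"] by simp

lemma one_le_beta: "p - 1 \<le> i \<Longrightarrow> 1 \<le> beta i"
  using div_le_mono[of "p - 1" i "p - 1"] p_gt_2 by (simp add: beta_def)

lemma beta_tilde_eq_beta:
  assumes "s \<ge> 1"
  shows "beta_tilde p s = beta (s - 1)"
proof -
  have "real s - 1 = real (s - 1)" "real p - 1 = real (p - 1)"
    using assms p_gt_2 by (simp_all add: of_nat_diff)
  then show ?thesis
    unfolding beta_tilde_def beta_def by (simp only: floor_divide_of_nat_eq)
qed

lemma beta_add_min_le:
  assumes "s \<ge> 1"
  shows "beta m + min 0 (int s - 1 - int m) \<le> beta (s - 1)"
proof (cases "m \<le> s - 1")
  case True
  then have "m div (p - 1) \<le> (s - 1) div (p - 1)"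
    by (rule div_le_mono)
  then show ?thesis
    by (simp add: beta_def)
next
  case False
  then have "m div (p - 1) \<le> (s - 1) div (p - 1) + (m - (s - 1))"
    using div_add_le_add[of "p - 1" "m - (s - 1)" "s - 1"] p_gt_2 by simp
  then show ?thesis
    using False assms by (simp add: beta_def)
qed

lemma beta_add_le_minus_1:
  assumes "k \<ge> 2 * s"
  shows "beta k + (int s - 1 - int k) \<le> -1"
proof -
  have "k div (p - 1) \<le> k div 2"
    using p_gt_2 by (intro div_le_mono2) auto
  then show ?thesis
    using assms by (simp add: beta_def)
qed

end

section \<open>Level-one polynomials\<close>

context padic_abs
begin

lemma fps_bounded_shifted_omega0:
  assumes "near_one w"
  shows "fps_bounded (\<lambda>i. min 0 (int i - 1)) (fps_of_poly (shifted_omega0 w))"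
  using assms absv_near_one[OF assms] p_gt_2
  by (auto simp: fps_bounded_def shifted_omega0_def near_one_def coeff_pCons power_int_minus
      inverse_eq_divide less_imp_le[OF p_powi_pos] split: nat.splits)

lemma fps_bounded_shifted_omega0_power:
  assumes "near_one w"
  shows "fps_bounded (\<lambda>i. min 0 (int i - int k)) (fps_of_poly (shifted_omega0 w ^ k))"
proof (induction k)
  case 0
  then show ?case
    by (simp add: fps_bounded_1)
next
  case (Suc k)
  have "min 0 (int i - 1) + min 0 (int j - int k) \<le> min 0 (int (i + j) - int (Suc k))" for i j
    by (simp add: min_def)
  then show ?case
    using fps_bounded_mult[OF fps_bounded_shifted_omega0[OF assms] Suc]
    by (simp add: fps_of_poly_mult)
qed

lemma fps_bounded_shifted_ell1:
  assumes "near_one w"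
  shows "fps_bounded beta (fps_of_poly (shifted_ell1 p w))"
  unfolding shifted_ell1_eq_sum fps_of_poly_sum
proof (intro fps_bounded_sum)
  fix k assume "k \<in> {..<p}"
  define c where "c = (of_nat (p choose Suc k) / of_nat p :: 'a)"
  define \<delta> where "\<delta> = (if Suc k = p then 1 else 0 :: int)"
  have c: "absv c \<le> real p powi \<delta>"
    using absv_choose_div_p_le[of "Suc k"] \<open>k \<in> {..<p}\<close> by (simp add: c_def \<delta>_def)
  have exponent: "\<delta> + min 0 (int i - int k) \<le> beta i" for i
    using beta_nonneg[of i] one_le_beta[of i] by (auto simp: \<delta>_def min_def)
  show "fps_bounded beta (fps_of_poly (smult c (shifted_omega0 w ^ k)))"
    unfolding fps_bounded_def
  proof
    fix i
    have "absv c * absv (coeff (shifted_omega0 w ^ k) i)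
        \<le> real p powi \<delta> * real p powi min 0 (int i - int k)"
      using c fps_bounded_shifted_omega0_power[OF assms, of k]
      by (intro mult_mono) (auto simp: fps_bounded_def)
    also have "\<dots> \<le> real p powi beta i"
      using exponent by (simp add: p_powi_mono flip: p_powi_add)
    finally show "absv (fps_of_poly (smult c (shifted_omega0 w ^ k)) $ i) \<le> real p powi beta i"
      by (simp add: absv_mult)
  qed
qed

lemma absv_coeff_0_shifted_ell1:
  assumes "near_one w"
  shows "absv (coeff (shifted_ell1 p w) 0) = 1"
  using absv_sum_powers_near_one[OF assms] absv_of_p p_gt_2
  by (simp add: poly_shifted_ell1 absv_divide flip: poly_0_coeff_0)

lemma prod_shifted_ell1:
  assumes "\<And>k. near_one (w k)"
  shows "fps_bounded beta (fps_of_poly (\<Prod>k\<in>K. shifted_ell1 p (w k)))"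
    and "absv (coeff (\<Prod>k\<in>K. shifted_ell1 p (w k)) 0) = 1"
proof -
  show "fps_bounded beta (fps_of_poly (\<Prod>k\<in>K. shifted_ell1 p (w k)))"
    unfolding fps_of_poly_prod
    by (intro fps_bounded_prod fps_bounded_shifted_ell1 assms beta_superadditive) simp
  show "absv (coeff (\<Prod>k\<in>K. shifted_ell1 p (w k)) 0) = 1"
    using absv_coeff_0_shifted_ell1[OF assms]
    by (simp add: poly_prod absv_prod flip: poly_0_coeff_0)
qed

lemma shifted_omega0_dvd_shifted_ell1_minus_1:
  "shifted_omega0 w dvd shifted_ell1 p w - (1 :: 'a poly)"
proof -
  have "[:w, w:] - 1 = shifted_omega0 w"
    by (simp add: shifted_omega0_def one_pCons)
  then have "shifted_omega0 w dvd [:w, w:] ^ i - 1" for i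
    using power_diff_1_eq[of "[:w, w:]" i] by (metis dvd_triv_left)
  then have "shifted_omega0 w dvd (\<Sum>i<p. [:w, w:] ^ i - 1)"
    by (intro dvd_sum)
  moreover have "(\<Sum>i<p. [:w, w:] ^ i - 1) = smult (of_nat p) (shifted_ell1 p w - 1)"
    using of_nat_p_neq_0
    by (simp add: shifted_ell1_def sum_subtractf smult_diff_right of_nat_poly)
  ultimately show ?thesis
    using of_nat_p_neq_0 by (simp add: dvd_smult_iff)
qed

lemma linear_power_minus_1_eq:
  "[:w, w:] ^ p - 1 = shifted_omega0 w * smult (of_nat p) (shifted_ell1 p (w :: 'a))"
proof -
  have "[:w, w:] - 1 = shifted_omega0 w"
    by (simp add: shifted_omega0_def one_pCons)
  moreover have "smult (of_nat p) (shifted_ell1 p w) = (\<Sum>i<p. [:w, w:] ^ i)"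
    using of_nat_p_neq_0 by (simp add: shifted_ell1_def)
  ultimately show ?thesis
    by (simp add: power_diff_1_eq)
qed

lemma linear_power_minus_1_dvd:
  assumes "shifted_omega0 w dvd F * shifted_ell1 p w - 1"
  shows "[:w, w:] ^ p - 1 dvd F * shifted_ell1 p w - shifted_ell1 p (w :: 'a)"
proof -
  have "shifted_omega0 w * shifted_ell1 p w dvd F * shifted_ell1 p w - shifted_ell1 p w"
    using shifted_omega0_dvd_shifted_ell1_minus_1 assms by (rule mult_dvd_mult_diff)
  then show ?thesis
    using of_nat_p_neq_0 by (simp add: linear_power_minus_1_eq mult_smult_right smult_dvd_iff)
qed

lemma comaximal_shifted_ell1_shifted_omega0:
  assumes v: "near_one v" and w: "near_one w"
  shows "comaximal (shifted_ell1 p v) (shifted_omega0 w)"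
proof -
  define z where "z = (1 - w) / w"
  have "w \<noteq> 0"
    using absv_near_one[OF w] by auto
  then have L: "shifted_omega0 w = smult w [:- z, 1:]" and vz: "v * (1 + z) = v / w"
    by (simp_all add: shifted_omega0_def z_def field_simps)
  have "near_one (v / w)"
    unfolding divide_inverse using v w by (intro near_one_mult near_one_inverse)
  then have e: "poly (shifted_ell1 p v) z \<noteq> 0"
    using absv_sum_powers_near_one[of "v / w"] p_gt_2 of_nat_p_neq_0
    by (auto simp: poly_shifted_ell1 vz)
  have "shifted_ell1 p v - smult (1 / w) (synthetic_div (shifted_ell1 p v) z) * shifted_omega0 w
      = shifted_ell1 p v - [:- z, 1:] * synthetic_div (shifted_ell1 p v) z"
    using \<open>w \<noteq> 0\<close> by (simp add: L)
  also have "\<dots> = [:poly (shifted_ell1 p v) z:]"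
    using synthetic_div_correct'[of z "shifted_ell1 p v"] by (simp add: algebra_simps)
  finally show ?thesis
    using e by (rule comaximal_if_diff_const)
qed

end

section \<open>Reduction modulo steep polynomials\<close>

context padic_abs
begin

definition steep :: "'a poly \<Rightarrow> bool" where
  "steep N \<longleftrightarrow> 0 < degree N \<and> absv (lead_coeff N) = 1
     \<and> fps_bounded (\<lambda>i. int i - int (degree N)) (fps_of_poly N)"

lemma steep_mult:
  assumes "steep A" "steep B"
  shows "steep (A * B)"
proof -
  have "A \<noteq> 0" "B \<noteq> 0"
    using assms by (auto simp: steep_def)
  then have "degree (A * B) = degree A + degree B"
    by (rule degree_mult_eq)
  moreover have "absv (lead_coeff (A * B)) = 1"
    using assms by (simp add: steep_def lead_coeff_mult absv_mult)
  moreover have "fps_bounded (\<lambda>i. int i - int (degree A + degree B)) (fps_of_poly (A * B))"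
    using assms fps_bounded_mult[of "\<lambda>i. int i - int (degree A)" "fps_of_poly A"
        "\<lambda>i. int i - int (degree B)" "fps_of_poly B"]
    by (simp add: steep_def fps_of_poly_mult)
  ultimately show ?thesis
    using assms by (simp add: steep_def)
qed

lemma steep_shifted_omega0:
  assumes "near_one w"
  shows "steep (shifted_omega0 w)"
proof -
  have "w \<noteq> 0"
    using absv_near_one[OF assms] by auto
  then show ?thesis
    using absv_near_one[OF assms] fps_bounded_shifted_omega0[OF assms]
    by (auto simp: steep_def shifted_omega0_def elim: fps_bounded_mono)
qed

lemma steep_prod:
  assumes "finite S" "S \<noteq> {}" "\<And>j. j \<in> S \<Longrightarrow> steep (f j)"
  shows "steep (prod f S)"
  using assms by (induction S rule: finite_ne_induct) (simp_all add: steep_mult)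

lemma absv_coeff_monom_mod_steep:
  assumes N: "steep N"
  shows "absv (coeff (monom 1 k mod N) i) \<le> real p powi min 0 (int i - int k)"
proof (induction k arbitrary: i)
  case 0
  have "monom 1 0 mod N = 1"
    using N by (simp add: steep_def mod_poly_less flip: one_poly_eq_simps(1))
  then show ?case
    by (simp add: coeff_1)
next
  case (Suc k)
  define s where "s = degree N"
  define W where "W = monom 1 k mod N"
  define c where "c = coeff W (s - 1) / lead_coeff N"
  have s: "s \<ge> 1"
    using N by (simp add: steep_def s_def)
  then have step: "monom 1 (Suc k) mod N = pCons 0 W - smult c N"
    by (simp add: W_def c_def s_def monom_Suc_mod)
  have shift: "absv (coeff (pCons 0 W) i) \<le> real p powi min 0 (int i - int (Suc k))"
    using Suc.IH[of "i - 1"] by (cases i) (simp_all add: W_def less_imp_le[OF p_powi_pos])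
  have reduce: "absv (c * coeff N i) \<le> real p powi min 0 (int i - int (Suc k))"
  proof (cases "i \<le> s")
    case True
    have "absv c \<le> real p powi min 0 (int (s - 1) - int k)"
      using Suc.IH[of "s - 1"] N by (simp add: c_def W_def steep_def absv_divide)
    moreover have "absv (coeff N i) \<le> real p powi (int i - int s)"
      using N by (simp add: steep_def fps_bounded_def s_def)
    ultimately have "absv (c * coeff N i)
        \<le> real p powi min 0 (int (s - 1) - int k) * real p powi (int i - int s)"
      unfolding absv_mult by (intro mult_mono) auto
    also have "\<dots> = real p powi (min 0 (int (s - 1) - int k) + (int i - int s))"
      by (simp add: p_powi_add)
    also have "\<dots> \<le> real p powi min 0 (int i - int (Suc k))"
      using True s by (intro p_powi_mono) (simp add: of_nat_diff min_def)
    finally show ?thesis .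
  next
    case False
    then show ?thesis
      by (simp add: s_def coeff_eq_0 less_imp_le[OF p_powi_pos])
  qed
  show ?case
    unfolding step using shift reduce by (simp add: absv_diff_le)
qed

lemma norm1_monom_mod_steep:
  assumes N: "steep N"
  shows "norm1 absv (monom 1 k mod N) \<le> real p powi min 0 (int (degree N) - 1 - int k)"
  unfolding norm1_le_iff
proof
  fix i
  show "absv (coeff (monom 1 k mod N) i) \<le> real p powi min 0 (int (degree N) - 1 - int k)"
  proof (cases "i < degree N")
    case True
    then have "real p powi min 0 (int i - int k) \<le> real p powi min 0 (int (degree N) - 1 - int k)"
      by (intro p_powi_mono) auto
    then show ?thesis
      using absv_coeff_monom_mod_steep[OF N, of k i] by linarith
  next
    case False
    have "N \<noteq> 0"
      using N by (auto simp: steep_def)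
    then have "coeff (monom 1 k mod N) i = 0"
      using False degree_mod_less[of N "monom 1 k"] by (auto intro: coeff_eq_0)
    then show ?thesis
      by (simp add: less_imp_le[OF p_powi_pos])
  qed
qed

lemma norm1_mod_steep_le:
  assumes N: "steep N"
    and A: "\<And>k. absv (coeff A k) * real p powi min 0 (int (degree N) - 1 - int k) \<le> B"
    and "B \<ge> 0"
  shows "norm1 absv (A mod N) \<le> B"
proof (subst poly_mod_as_sum_of_monoms, intro norm1_sum_le)
  fix k
  have "absv (coeff A k) * norm1 absv (monom 1 k mod N)
      \<le> absv (coeff A k) * real p powi min 0 (int (degree N) - 1 - int k)"
    using norm1_monom_mod_steep[OF N] by (intro mult_left_mono) auto
  then show "norm1 absv (smult (coeff A k) (monom 1 k mod N)) \<le> B"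
    using A[of k] by (simp add: norm1_smult)
qed fact

lemma norm1_mod_steep_le_norm1:
  assumes "steep N"
  shows "norm1 absv (A mod N) \<le> norm1 absv A"
proof (rule norm1_mod_steep_le[OF assms])
  fix k
  have "real p powi min 0 (int (degree N) - 1 - int k) \<le> real p powi 0"
    by (intro p_powi_mono) simp
  then have "absv (coeff A k) * real p powi min 0 (int (degree N) - 1 - int k) \<le> absv (coeff A k)"
    using p_powi_pos by (intro mult_right_le_one_le) (simp_all add: less_imp_le)
  then show "absv (coeff A k) * real p powi min 0 (int (degree N) - 1 - int k) \<le> norm1 absv A"
    using coeff_le_norm1[of A k] by linarith
qed (rule norm1_nonneg)

lemma norm1_mod_steep_le_beta:
  assumes N: "steep N" and T: "fps_bounded beta (fps_of_poly T)"
  shows "norm1 absv (T mod N) \<le> real p powi beta (degree N - 1)"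
proof (rule norm1_mod_steep_le[OF N])
  fix k
  have "degree N \<ge> 1"
    using N by (simp add: steep_def)
  have "absv (coeff T k) * real p powi min 0 (int (degree N) - 1 - int k)
      \<le> real p powi beta k * real p powi min 0 (int (degree N) - 1 - int k)"
    using T by (intro mult_right_mono) (auto simp: fps_bounded_def)
  also have "\<dots> \<le> real p powi beta (degree N - 1)"
    using beta_add_min_le[OF \<open>degree N \<ge> 1\<close>, of k] by (simp add: p_powi_mono flip: p_powi_add)
  finally show "absv (coeff T k) * real p powi min 0 (int (degree N) - 1 - int k)
      \<le> real p powi beta (degree N - 1)" .
qed (simp add: less_imp_le[OF p_powi_pos])

lemma norm1_mod_steep_le_high_order:
  assumes N: "steep N" and E: "fps_bounded beta (fps_of_poly E)"
    and low: "\<And>k. k < 2 * degree N \<Longrightarrow> coeff E k = 0"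
  shows "norm1 absv (E mod N) \<le> 1 / real p"
proof (rule norm1_mod_steep_le[OF N])
  fix k
  show "absv (coeff E k) * real p powi min 0 (int (degree N) - 1 - int k) \<le> 1 / real p"
  proof (cases "k < 2 * degree N")
    case False
    then have "absv (coeff E k) * real p powi min 0 (int (degree N) - 1 - int k)
        \<le> real p powi beta k * real p powi (int (degree N) - 1 - int k)"
      using E by (simp add: fps_bounded_def mult_right_mono less_imp_le[OF p_powi_pos])
    also have "\<dots> = real p powi (beta k + (int (degree N) - 1 - int k))"
      by (simp add: p_powi_add)
    also have "\<dots> \<le> real p powi (-1)"
      using beta_add_le_minus_1[of "degree N" k] False by (intro p_powi_mono) simp
    finally show ?thesis
      by (simp add: power_int_minus inverse_eq_divide)
  qed (simp add: low p_gt_2)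
qed (simp add: p_gt_2)

lemma truncated_inverse:
  assumes G: "fps_bounded beta (fps_of_poly G)" "absv (coeff G 0) = 1"
  obtains T where "fps_bounded beta (fps_of_poly T)" "fps_bounded beta (fps_of_poly (T * G - 1))"
    and "\<And>k. k < M \<Longrightarrow> coeff (T * G - 1) k = 0"
proof
  define H where "H = inverse (fps_of_poly G)"
  define T where "T = (\<Sum>m<M. monom (H $ m) m)"
  have H: "fps_bounded beta H"
    unfolding H_def using G beta_superadditive by (intro fps_bounded_inverse) auto
  have HG: "H * fps_of_poly G = 1"
    using G(2) by (auto simp: H_def intro: inverse_mult_eq_1)
  have coeff_T: "coeff T i = (if i < M then H $ i else 0)" for i
    by (simp add: T_def coeff_sum coeff_monom)
  show T: "fps_bounded beta (fps_of_poly T)"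
    using H by (simp add: fps_bounded_def coeff_T less_imp_le[OF p_powi_pos])
  have "fps_bounded beta (fps_of_poly (T * G))"
    using fps_bounded_mult[OF T G(1)] beta_superadditive by (simp add: fps_of_poly_mult)
  moreover have "fps_bounded beta (fps_of_poly 1)"
    by (simp add: fps_bounded_1)
  ultimately show "fps_bounded beta (fps_of_poly (T * G - 1))"
    by (simp add: fps_bounded_def absv_diff_le)
  show "coeff (T * G - 1) k = 0" if "k < M" for k
  proof -
    have "coeff (T * G) k = (\<Sum>i\<le>k. H $ i * fps_of_poly G $ (k - i))"
      unfolding coeff_mult using that by (intro sum.cong) (simp_all add: coeff_T)
    also have "\<dots> = (H * fps_of_poly G) $ k"
      by (simp add: fps_mult_nth atLeast0AtMost)
    finally show ?thesis
      using HG by (simp add: coeff_1)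
  qed
qed

text \<open>Let T be a truncated inverse of G and E = T G - 1, which vanishes to order 2 deg N.
  Then R is the reduction of T - R E modulo N; reducing E gains a factor 1 / p, so the norm
  of R is controlled by that of the reduction of T.\<close>

lemma norm1_inverse_mod_steep:
  assumes N: "steep N"
    and G: "fps_bounded beta (fps_of_poly G)" "absv (coeff G 0) = 1"
    and R: "degree R < degree N" "N dvd R * G - 1"
  shows "norm1 absv R \<le> real p powi beta (degree N - 1)"
proof -
  define B where "B = real p powi beta (degree N - 1)"
  obtain T where T: "fps_bounded beta (fps_of_poly T)"
    and E: "fps_bounded beta (fps_of_poly (T * G - 1))"
    and low: "\<And>k. k < 2 * degree N \<Longrightarrow> coeff (T * G - 1) k = 0"
    using truncated_inverse[OF G] by blast
  define E where "E = T * G - 1"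
  have "R - (T - R * E) = T * (R * G - 1)"
    by (simp add: E_def algebra_simps)
  then have "R mod N = (T - R * E) mod N"
    using R(2) by (simp add: mod_eq_dvd_iff)
  then have R_eq: "R = T mod N - (R * (E mod N)) mod N"
    using R(1) by (simp add: mod_poly_less poly_mod_diff_left mod_mult_right_eq)
  define \<rho> where "\<rho> = norm1 absv R"
  have "norm1 absv ((R * (E mod N)) mod N) \<le> norm1 absv (R * (E mod N))"
    by (rule norm1_mod_steep_le_norm1[OF N])
  also have "\<dots> \<le> \<rho> * (1 / real p)"
    unfolding norm1_mult \<rho>_def E_def
    using norm1_mod_steep_le_high_order[OF N E low] norm1_nonneg[of R] by (rule mult_left_mono)
  finally have "norm1 absv ((R * (E mod N)) mod N) \<le> max B (\<rho> / real p)"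
    by simp
  moreover have "norm1 absv (T mod N) \<le> max B (\<rho> / real p)"
    using norm1_mod_steep_le_beta[OF N T] by (simp add: B_def)
  ultimately have "\<rho> \<le> max B (\<rho> / real p)"
    unfolding \<rho>_def by (subst R_eq) (rule norm1_diff_le)
  moreover have "\<rho> / real p < \<rho>" if "\<rho> > 0"
    using that p_gt_2 by (simp add: divide_less_eq)
  moreover have "B > 0"
    by (simp add: B_def p_powi_pos)
  ultimately show ?thesis
    using norm1_nonneg[of R] unfolding \<rho>_def B_def by (cases "norm1 absv R > 0") auto
qed

end

context padic_abs
begin

context
  fixes u :: 'a
  assumes near_one_u: "near_one u"
begin

lemma twist_omega_properties:
  shows "degree (twist u j (omega p m)) = p ^ m"
    and "twist u j (omega p m) \<noteq> 0"
    and "norm1 absv (twist u j (omega p m)) = 1"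
proof -
  define c where "c = u powi - j"
  have c: "absv c = 1"
    using near_one_power_int[OF near_one_u] absv_near_one by (simp add: c_def)
  then have "c \<noteq> 0"
    by auto
  have K: "p ^ m \<ge> 1"
    using p_gt_2 by simp
  show deg: "degree (twist u j (omega p m)) = p ^ m"
    using degree_linear_power_minus_1(1)[OF \<open>c \<noteq> 0\<close> K] by (simp add: twist_omega c_def)
  then show "twist u j (omega p m) \<noteq> 0"
    using K by (metis degree_0 not_one_le_zero)
  have "norm1 absv [:c, c:] \<le> 1"
    using c by (simp add: norm1_le_iff coeff_pCons split: nat.splits)
  then have "norm1 absv ([:c, c:] ^ (p ^ m) - 1) \<le> 1"
    by (intro norm1_diff_le) (simp_all add: norm1_power power_le_one norm1_nonneg)
  moreover have "absv (coeff ([:c, c:] ^ (p ^ m) - 1) (p ^ m)) = 1"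
    using degree_linear_power_minus_1(2)[OF \<open>c \<noteq> 0\<close> K] c by (simp add: absv_power)
  ultimately show "norm1 absv (twist u j (omega p m)) = 1"
    using coeff_le_norm1[of "[:c, c:] ^ (p ^ m) - 1" "p ^ m"] by (simp add: twist_omega c_def)
qed

lemma twist_omega_eq_mult_xi:
  "n \<ge> 1 \<Longrightarrow> twist u j (omega p n) = twist u j (omega p (n - 1)) * twist u j (xi p n)"
  using xi_eq_sum(2)[of n p, where 'b = 'a] p_gt_2 by (simp add: twist_def pcompose_mult)

lemma norm1_twist_xi: "n \<ge> 1 \<Longrightarrow> norm1 absv (twist u j (xi p n)) = 1"
  using twist_omega_properties(3)[of j n] twist_omega_properties(3)[of j "n - 1"]
  by (simp add: twist_omega_eq_mult_xi norm1_mult)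

lemma norm1_ellS: "n \<ge> 1 \<Longrightarrow> norm1 absv (ellS p u n S) = real p ^ card S"
  using absv_of_p p_gt_2 norm1_twist_xi
  by (simp add: ellS_def norm1_prod norm1_smult absv_divide)

text \<open>Distinct twists of \<omega>_m are comaximal: a suitable multiple of one differs from the other
  by the constant u^(p^m (k - j)) - 1, which is nonzero as u is not a root of unity.\<close>

lemma comaximal_twist_omega:
  assumes "u \<noteq> 1" "j \<noteq> k"
  shows "comaximal (twist u j (omega p m)) (twist u k (omega p m))"
proof -
  define cj ck where "cj = u powi - j" and "ck = u powi - k"
  define \<rho> where "\<rho> = (cj / ck) ^ (p ^ m)"
  have "u \<noteq> 0"
    using absv_near_one[OF near_one_u] by auto
  then have "cj / ck = u powi (k - j)"
    by (simp add: cj_def ck_def power_int_diff power_int_minus field_simps)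
  then have "\<rho> = (u powi (k - j)) powi int (p ^ m)"
    by (simp only: \<rho>_def power_int_of_nat)
  then have "\<rho> = u powi ((k - j) * int (p ^ m))"
    by (simp only: power_int_mult)
  moreover have "(k - j) * int (p ^ m) \<noteq> 0"
    using assms p_gt_2 by simp
  ultimately have "\<rho> \<noteq> 1"
    using power_int_neq_1_if_near_one[OF near_one_u \<open>u \<noteq> 1\<close>] by simp
  have "ck \<noteq> 0"
    using \<open>u \<noteq> 0\<close> by (simp add: ck_def)
  then have lin: "smult (cj / ck) [:ck, ck:] = [:cj, cj:]"
    by simp
  have "[:cj, cj:] ^ (p ^ m) = smult \<rho> ([:ck, ck:] ^ (p ^ m))"
    unfolding \<rho>_def smult_power[symmetric] lin ..
  then have "twist u j (omega p m) - [:\<rho>:] * twist u k (omega p m) = [:\<rho> - 1:]"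
    by (simp add: twist_omega flip: cj_def ck_def) (simp add: smult_diff_right one_pCons)
  then show ?thesis
    by (rule comaximal_if_diff_const) (use \<open>\<rho> \<noteq> 1\<close> in simp)
qed

end

end

section \<open>The change of variables\<close>

locale padic_base_change = padic_abs absv p
  for absv :: "'a::field \<Rightarrow> real" and p +
  fixes u :: 'a and a :: int and n :: nat
  assumes near_one_u: "near_one u" and n_ge_1: "n \<ge> 1"
begin

definition base :: "'a poly" where
  "base = twist u a (omega p (n - 1))"

definition weight :: "int \<Rightarrow> 'a" where
  "weight j = u powi ((a - j) * int (p ^ (n - 1)))"

lemma u_neq_0: "u \<noteq> 0"
  using absv_near_one[OF near_one_u] by auto

lemma near_one_weight: "near_one (weight j)"
  by (simp add: weight_def near_one_power_int near_one_u)

lemma weight_a [simp]: "weight a = 1"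
  by (simp add: weight_def)

lemma linear_power_eq_pcompose:
  "[:u powi - j, u powi - j:] ^ (p ^ (n - 1)) = pcompose [:weight j, weight j:] base"
proof -
  define N where "N = p ^ (n - 1)"
  have lin: "[:c, c:] ^ N = smult (c ^ N) ([:1, 1:] ^ N)" for c :: 'a
    by (simp flip: smult_power)
  have pow: "(u powi c) ^ N = u powi (c * int N)" for c
    by (simp only: power_int_mult power_int_of_nat)
  have "weight j * (u powi - a) ^ N = u powi ((a - j) * int N + - a * int N)"
    unfolding weight_def N_def[symmetric] pow using u_neq_0 by (rule power_int_add[symmetric, OF disjI1])
  also have "\<dots> = (u powi - j) ^ N"
    by (simp add: pow algebra_simps)
  finally have w: "weight j * (u powi - a) ^ N = (u powi - j) ^ N" .
  have "pcompose [:weight j, weight j:] base = smult (weight j) (base + 1)"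
    by (simp add: pcompose_pCons algebra_simps smult_add_right one_pCons)
  also have "base + 1 = smult ((u powi - a) ^ N) ([:1, 1:] ^ N)"
    using lin[of "u powi - a"] by (simp add: base_def twist_omega N_def)
  also have "smult (weight j) \<dots> = [:u powi - j, u powi - j:] ^ N"
    using lin[of "u powi - j"] w by simp
  finally show ?thesis
    by (simp add: N_def)
qed

lemma twist_omega_prev: "twist u j (omega p (n - 1)) = pcompose (shifted_omega0 (weight j)) base"
proof -
  have "shifted_omega0 (weight j) = [:weight j, weight j:] - 1"
    by (simp add: shifted_omega0_def one_pCons)
  then show ?thesis
    unfolding twist_omega linear_power_eq_pcompose by (simp only: pcompose_diff pcompose_1)
qed

lemma twist_omega_cur: "twist u j (omega p n) = pcompose ([:weight j, weight j:] ^ p - 1) base"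
proof -
  have "p ^ n = p ^ (n - 1) * p"
    using n_ge_1 by (cases n) auto
  then have "twist u j (omega p n) = ([:u powi - j, u powi - j:] ^ (p ^ (n - 1))) ^ p - 1"
    by (simp only: twist_omega power_mult)
  then show ?thesis
    unfolding linear_power_eq_pcompose by (simp add: pcompose_diff pcompose_1 pcompose_power_left)
qed

lemma twist_xi_div_p:
  "smult (1 / of_nat p) (twist u j (xi p n)) = pcompose (shifted_ell1 p (weight j)) base"
proof -
  have "twist u j (xi p n) = (\<Sum>i<p. ([:u powi - j, u powi - j:] ^ (p ^ (n - 1))) ^ i)"
    using xi_eq_sum(1)[OF n_ge_1, of p, where 'b = 'a] p_gt_2
    by (simp add: twist_def pcompose_sum pcompose_power_left pcompose_pCons)
  then show ?thesis
    unfolding linear_power_eq_pcompose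
    by (simp add: shifted_ell1_def pcompose_smult pcompose_sum pcompose_power_left)
qed

lemma ellS_eq_pcompose: "ellS p u n S = pcompose (\<Prod>k\<in>S. shifted_ell1 p (weight k)) base"
  by (simp add: ellS_def twist_xi_div_p pcompose_prod)

lemma omegaS_prev_eq_pcompose:
  "omegaS p u (n - 1) S = pcompose (\<Prod>j\<in>S. shifted_omega0 (weight j)) base"
  unfolding omegaS_def twist_omega_prev by (simp add: pcompose_prod)

lemma degree_base: "degree base = p ^ (n - 1)"
  by (simp add: base_def twist_omega_properties(1)[OF near_one_u])

lemma norm1_base: "norm1 absv base \<le> 1"
  by (simp add: base_def twist_omega_properties(3)[OF near_one_u])

end

context padic_base_change
begin

lemma degree_prod_shifted_omega0:
  "finite J \<Longrightarrow> degree (\<Prod>j\<in>J. shifted_omega0 (weight j)) = card J"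
proof -
  have "weight j \<noteq> 0" for j
    using absv_near_one[OF near_one_weight, of j] by auto
  then have "shifted_omega0 (weight j) \<noteq> 0" "degree (shifted_omega0 (weight j)) = 1" for j
    by (simp_all add: shifted_omega0_def)
  then show "finite J \<Longrightarrow> ?thesis"
    by (simp add: degree_prod_sum_eq)
qed

definition interpolation_modulus :: "int set \<Rightarrow> int \<Rightarrow> 'a poly" where
  "interpolation_modulus J' j
     = (if j \<in> J' then twist u j (omega p n) else twist u j (omega p (n - 1)))"

lemma degree_prod_interpolation_modulus:
  assumes "finite J" "J' \<subseteq> J"
  shows "degree (\<Prod>j\<in>J. interpolation_modulus J' j) = ((p - 1) * card J' + card J) * p ^ (n - 1)"
proof -
  have card: "card J' \<le> card J" "finite J'"
    using assms by (auto intro: card_mono finite_subset)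
  have "p ^ n = p ^ (n - 1) * p"
    using n_ge_1 by (cases n) auto
  then have "interpolation_modulus J' j \<noteq> 0"
    "degree (interpolation_modulus J' j) = (if j \<in> J' then p ^ (n - 1) * p else p ^ (n - 1))" for j
    using twist_omega_properties(1,2)[OF near_one_u] by (auto simp: interpolation_modulus_def)
  then have "degree (\<Prod>j\<in>J. interpolation_modulus J' j)
      = (\<Sum>j\<in>J'. p ^ (n - 1) * p) + (\<Sum>j\<in>J - J'. p ^ (n - 1))"
    using sum.subset_diff[OF assms(2,1), of "\<lambda>j. if j \<in> J' then p ^ (n - 1) * p else p ^ (n - 1)"]
    by (simp add: degree_prod_sum_eq add.commute)
  also have "\<dots> = ((p - 1) * card J' + card J) * p ^ (n - 1)"
    using card p_gt_2 by (simp add: card_Diff_subset[OF card(2) assms(2)] algebra_simps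
        diff_mult_distrib diff_mult_distrib2)
  finally show ?thesis .
qed

lemma xi_cond_unique:
  assumes "u \<noteq> 1" "finite J" "J' \<subseteq> J"
    and f: "xi_cond p u n J' J f" and g: "xi_cond p u n J' J g"
  shows "f = g"
proof -
  let ?M = "interpolation_modulus J'"
  have M_dvd: "?M j dvd twist u j (omega p n)" for j
    using twist_omega_eq_mult_xi[OF near_one_u n_ge_1] by (auto simp: interpolation_modulus_def)
  have "prod ?M J dvd f - g"
  proof (rule prod_dvd_if_pairwise_comaximal)
    show "comaximal (?M j) (?M k)" if "j \<noteq> k" for j k
      using comaximal_twist_omega[OF near_one_u \<open>u \<noteq> 1\<close> that]
      by (rule comaximal_divisors[OF _ M_dvd M_dvd])
    show "?M j dvd f - g" if "j \<in> J" for j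
    proof (cases "j \<in> J'")
      case True
      define c where "c = smult (1 / of_nat p) (twist u j (xi p n))"
      have "?M j dvd (f - c) - (g - c)"
        using f g True
        by (intro dvd_diff[of _ "f - c"]) (auto simp: xi_cond_def interpolation_modulus_def c_def)
      then show ?thesis by simp
    next
      case False
      have "?M j dvd (f - 1) - (g - 1)"
        using f g False that
        by (intro dvd_diff[of _ "f - 1"]) (auto simp: xi_cond_def interpolation_modulus_def)
      then show ?thesis by simp
    qed
  qed (use assms in auto)
  moreover have "degree (f - g) < degree (prod ?M J)"
    using f g degree_diff_le_max[of f g] unfolding degree_prod_interpolation_modulus[OF assms(2,3)]
    unfolding xi_cond_def by linarith
  ultimately show ?thesis
    by (metis dvd_imp_degree_le leD right_minus_eq)
qed

lemma exists_inverse_mod: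
  assumes "finite J" "J \<noteq> {}"
  obtains R where "degree R < card J"
    "(\<Prod>j\<in>J. shifted_omega0 (weight j)) dvd R * (\<Prod>k\<in>K. shifted_ell1 p (weight k)) - 1"
proof -
  define N G where "N = (\<Prod>j\<in>J. shifted_omega0 (weight j))"
    and "G = (\<Prod>k\<in>K. shifted_ell1 p (weight k))"
  have "comaximal G N"
    unfolding N_def G_def
    by (intro comaximal_prod_left comaximal_prod_right comaximal_shifted_ell1_shifted_omega0
        near_one_weight)
  then obtain s t where st: "s * G + t * N = 1"
    unfolding comaximal_def by blast
  have degN: "degree N = card J"
    using assms(1) by (simp add: N_def degree_prod_shifted_omega0)
  then have "N \<noteq> 0"
    using assms by auto
  have "degree (s mod N) < card J"
    using degree_mod_less[OF \<open>N \<noteq> 0\<close>, of s] degN assms by (auto simp: card_gt_0_iff)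
  moreover have "s mod N * G - 1 = (s * G + t * N - 1) - (t + s div N * G) * N"
    by (simp add: algebra_simps flip: minus_div_mult_eq_mod)
  then have "N dvd s mod N * G - 1"
    using st by simp
  ultimately show ?thesis
    using that by (simp add: N_def G_def)
qed

lemma xi_cond_pcompose:
  assumes J: "finite J" "J' \<subseteq> J" "J \<noteq> {}" and R: "degree R < card J"
    and dvd: "(\<Prod>j\<in>J. shifted_omega0 (weight j)) dvd R * (\<Prod>k\<in>J'. shifted_ell1 p (weight k)) - 1"
  shows "xi_cond p u n J' J (pcompose R base * ellS p u n J')"
proof -
  define G where "G = (\<Prod>k\<in>J'. shifted_ell1 p (weight k))"
  have finJ': "finite J'"
    using J by (auto intro: finite_subset)
  have X: "pcompose R base * ellS p u n J' = pcompose (R * G) base"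
    by (simp add: ellS_eq_pcompose G_def pcompose_mult)
  have L: "shifted_omega0 (weight j) dvd R * G - 1" if "j \<in> J" for j
    using dvd_prodI[OF J(1) that, of "\<lambda>j. shifted_omega0 (weight j)"] dvd
    by (auto simp: G_def intro: dvd_trans)
  have "degree (R * G) < (p - 1) * card J' + card J"
    using R degree_mult_le[of R G] degree_prod_shifted_ell1[OF finJ', of p weight]
    by (simp add: G_def mult.commute)
  then have deg: "degree (pcompose R base * ellS p u n J') < ((p - 1) * card J' + card J) * p ^ (n - 1)"
    using p_gt_2 by (simp add: X degree_pcompose degree_base)
  have cur: "twist u j (omega p n)
      dvd pcompose R base * ellS p u n J' - smult (1 / of_nat p) (twist u j (xi p n))"
    if "j \<in> J'" for j
  proof -
    define g where "g = shifted_ell1 p (weight j)"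
    have RG: "R * G = (R * (\<Prod>k\<in>J' - {j}. shifted_ell1 p (weight k))) * g"
      using prod.remove[OF finJ' that, of "\<lambda>k. shifted_ell1 p (weight k)"]
      by (simp add: G_def g_def mult_ac)
    have "[:weight j, weight j:] ^ p - 1 dvd R * G - g"
      using L[of j] that J(2) unfolding RG g_def by (intro linear_power_minus_1_dvd) auto
    then show ?thesis
      unfolding X twist_omega_cur twist_xi_div_p g_def
      by (metis pcompose_diff pcompose_dvd_pcompose)
  qed
  have prev: "twist u j (omega p (n - 1)) dvd pcompose R base * ellS p u n J' - 1"
    if "j \<in> J - J'" for j
    unfolding X twist_omega_prev using pcompose_dvd_pcompose[OF L[of j], of base] that
    by (simp add: pcompose_diff pcompose_1)
  show ?thesis
    using deg cur prev by (simp add: xi_cond_def)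
qed

end

context padic_base_change
begin

lemma norm1_pcompose_base_le:
  assumes "finite J" "J \<noteq> {}" "degree R < card J"
    and "(\<Prod>j\<in>J. shifted_omega0 (weight j)) dvd R * (\<Prod>k\<in>K. shifted_ell1 p (weight k)) - 1"
  shows "norm1 absv (pcompose R base) \<le> real p powi beta (card J - 1)"
proof -
  have "steep (\<Prod>j\<in>J. shifted_omega0 (weight j))"
    using assms(1,2) by (intro steep_prod steep_shifted_omega0 near_one_weight)
  from norm1_inverse_mod_steep[OF this prod_shifted_ell1[where w = weight, OF near_one_weight]
      _ assms(4)]
  have "norm1 absv R \<le> real p powi beta (card J - 1)"
    using assms(1,3) by (simp add: degree_prod_shifted_omega0)
  then show ?thesis
    using norm1_pcompose_le[OF norm1_base, of R] by linarith
qed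

text \<open>The base polynomial vanishes at u^a - 1, where the composite therefore takes the
  value R(0); this is a unit because R(0) G(0) = 1.\<close>

lemma absv_poly_pcompose_base:
  assumes "finite J" "a \<in> J"
    and "(\<Prod>j\<in>J. shifted_omega0 (weight j)) dvd R * (\<Prod>k\<in>K. shifted_ell1 p (weight k)) - 1"
  shows "absv (poly (pcompose R base) (u powi a - 1)) = 1" and "absv (u powi a - 1) < 1"
proof -
  define N G where "N = (\<Prod>j\<in>J. shifted_omega0 (weight j))"
    and "G = (\<Prod>k\<in>K. shifted_ell1 p (weight k))"
  obtain Q where "R * G - 1 = N * Q"
    using assms(3) unfolding N_def G_def by blast
  moreover have "poly N 0 = 0"
    using assms(1,2) by (simp add: N_def poly_prod shifted_omega0_def) (use weight_a in blast)
  ultimately have "poly R 0 * poly G 0 = 1"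
    by (metis eq_iff_diff_eq_0 mult_zero_left poly_1 poly_diff poly_mult)
  moreover have "absv (poly G 0) = 1"
    using prod_shifted_ell1(2)[where w = weight, OF near_one_weight, of K]
    by (simp add: G_def poly_0_coeff_0)
  ultimately have R0: "absv (poly R 0) = 1"
    using absv_mult[of "poly R 0" "poly G 0"] by simp
  have "poly [:u powi - a, u powi - a:] (u powi a - 1) = u powi - a * u powi a"
    by (simp add: algebra_simps)
  also have "\<dots> = 1"
    using u_neq_0 by (simp add: power_int_minus)
  finally have "poly base (u powi a - 1) = 0"
    by (simp add: base_def twist_omega)
  then show "absv (poly (pcompose R base) (u powi a - 1)) = 1"
    by (simp add: poly_pcompose R0)
  have "absv (u powi a - 1) \<le> 1 / real p"
    using near_one_power_int[OF near_one_u, of a] by (simp add: near_one_def)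
  also have "\<dots> < 1"
    using p_gt_2 by simp
  finally show "absv (u powi a - 1) < 1" .
qed

lemma xitilde_factorization:
  assumes "u \<noteq> 1" "finite J" "a \<in> J" "J' \<subseteq> J"
  obtains F where "\<exists>!f. xi_cond p u n J' J f"
    and "xitilde p u n J' J = F * ellS p u n J'"
    and "omegaS p u (n - 1) J dvd F * ellS p u n J' - 1"
    and "degree F < degree (omegaS p u (n - 1) J)"
    and "norm1 absv F \<le> real p powi beta (card J - 1)"
    and "absv (poly F (u powi a - 1)) = 1" "absv (u powi a - 1) < 1"
proof -
  define N G where "N = (\<Prod>j\<in>J. shifted_omega0 (weight j))"
    and "G = (\<Prod>k\<in>J'. shifted_ell1 p (weight k))"
  have "J \<noteq> {}"
    using assms(3) by auto
  obtain R where R: "degree R < card J" "N dvd R * G - 1"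
    using exists_inverse_mod[OF assms(2) \<open>J \<noteq> {}\<close>] unfolding N_def G_def by blast
  define F where "F = pcompose R base"
  have cond: "xi_cond p u n J' J (F * ellS p u n J')"
    using xi_cond_pcompose[OF assms(2,4) \<open>J \<noteq> {}\<close> R(1)] R(2) by (simp add: F_def N_def G_def)
  then have uniq: "\<exists>!f. xi_cond p u n J' J f"
    using xi_cond_unique[OF assms(1,2,4)] by blast
  have "F * ellS p u n J' - 1 = pcompose (R * G - 1) base"
    by (simp add: F_def G_def ellS_eq_pcompose pcompose_mult pcompose_diff pcompose_1)
  then have dvd: "omegaS p u (n - 1) J dvd F * ellS p u n J' - 1"
    unfolding omegaS_prev_eq_pcompose N_def[symmetric] using R(2) by (simp add: pcompose_dvd_pcompose)
  have deg: "degree F < degree (omegaS p u (n - 1) J)"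
    unfolding F_def omegaS_prev_eq_pcompose using R(1) assms(2) p_gt_2
    by (simp add: degree_pcompose degree_base degree_prod_shifted_omega0)
  have X: "xitilde p u n J' J = F * ellS p u n J'"
    unfolding xitilde_def using uniq cond by (rule the1_equality)
  have norm: "norm1 absv F \<le> real p powi beta (card J - 1)"
    unfolding F_def using norm1_pcompose_base_le[OF assms(2) \<open>J \<noteq> {}\<close> R(1)] R(2)
    by (simp add: N_def G_def)
  have val: "absv (poly F (u powi a - 1)) = 1" "absv (u powi a - 1) < 1"
    unfolding F_def using absv_poly_pcompose_base[OF assms(2,3)] R(2) by (simp_all add: N_def G_def)
  show ?thesis
    by (rule that[OF uniq X dvd deg norm val])
qed

lemma xitilde_properties:
  assumes "u \<noteq> 1" "finite J" "a \<in> J" "J' \<subseteq> J"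
  shows "\<exists>!f. xi_cond p u n J' J f"
    and "xitilde p u n J' J
      = polyinv (ellS p u n J') (omegaS p u (n - 1) J) * ellS p u n J'"
    and "(omegaS p u n J' div omegaS p u (n - 1) J') dvd xitilde p u n J' J"
    and "omegaS p u (n - 1) J dvd xitilde p u n J' J - 1"
proof -
  obtain F where uniq: "\<exists>!f. xi_cond p u n J' J f" and X: "xitilde p u n J' J = F * ellS p u n J'"
    and dvd: "omegaS p u (n - 1) J dvd F * ellS p u n J' - 1"
    and deg: "degree F < degree (omegaS p u (n - 1) J)"
    by (rule xitilde_factorization[OF assms])
  have "(omegaS p u n J' div omegaS p u (n - 1) J') dvd ellS p u n J'"
    using p_gt_2 u_neq_0 by (intro omegaS_div_dvd_ellS[OF finite_subset[OF assms(4,2)] n_ge_1]) auto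
  then show "(omegaS p u n J' div omegaS p u (n - 1) J') dvd xitilde p u n J' J"
    by (simp add: X dvd_mult)
  show "xitilde p u n J' J = polyinv (ellS p u n J') (omegaS p u (n - 1) J) * ellS p u n J'"
    using polyinv_eqI[OF deg dvd] by (simp add: X)
  show "omegaS p u (n - 1) J dvd xitilde p u n J' J - 1"
    using dvd by (simp add: X)
  show "\<exists>!f. xi_cond p u n J' J f"
    by (fact uniq)
qed

lemma norm1_xitilde:
  assumes "u \<noteq> 1" "finite J" "a \<in> J" "J' \<subseteq> J"
  shows "real p ^ card J' \<le> norm1 absv (xitilde p u n J' J)"
    and "norm1 absv (xitilde p u n J' J) \<le> real p powi (int (card J') + beta_tilde p (card J))"
    and "beta_tilde p (card J) = 0 \<Longrightarrow> \<exists>h h'. integral_fps absv h \<and> integral_fps absv h'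
      \<and> h * h' = 1 \<and> fps_of_poly (xitilde p u n J' J) = h * fps_of_poly (ellS p u n J')"
proof -
  obtain F where X: "xitilde p u n J' J = F * ellS p u n J'"
    and norm_F: "norm1 absv F \<le> real p powi beta (card J - 1)"
    and unit: "absv (poly F (u powi a - 1)) = 1" "absv (u powi a - 1) < 1"
    by (rule xitilde_factorization[OF assms])
  have "beta (card J - 1) = beta_tilde p (card J)"
    using assms(2,3) by (subst beta_tilde_eq_beta) (auto simp: Suc_le_eq card_gt_0_iff)
  note upper = norm_F[unfolded this]
  have norm_X: "norm1 absv (xitilde p u n J' J) = real p ^ card J' * norm1 absv F"
    using norm1_ellS[OF near_one_u n_ge_1] by (simp add: X norm1_mult)
  have "1 \<le> norm1 absv F"
    using absv_poly_le_norm1[of "u powi a - 1" F] unit by simp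
  then show "real p ^ card J' \<le> norm1 absv (xitilde p u n J' J)"
    using p_gt_2 by (simp add: norm_X)
  show "norm1 absv (xitilde p u n J' J) \<le> real p powi (int (card J') + beta_tilde p (card J))"
    using upper p_gt_2 by (simp add: norm_X power_int_add mult_left_mono flip: power_int_of_nat)
  assume "beta_tilde p (card J) = 0"
  then have "norm1 absv F \<le> 1"
    using upper by simp
  moreover from this have "absv (coeff F 0) = 1"
    using unit by (intro absv_coeff_0_eq_1)
  ultimately show "\<exists>h h'. integral_fps absv h \<and> integral_fps absv h'
      \<and> h * h' = 1 \<and> fps_of_poly (xitilde p u n J' J) = h * fps_of_poly (ellS p u n J')"
    using unit_integral_fps[of F] by (auto simp: X fps_of_poly_mult)
qed

end

theorem mainTheorem2:
  fixes p :: nat and absv :: "'a::field_char_0 \<Rightarrow> real" and u :: 'a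
    and a b a' b' :: int and n :: nat
  assumes "prime p" and "odd p"
    and "is_Qp p absv"
    and "absv (u - 1) \<le> 1 / real p" and "u \<noteq> 1"
    and "a \<le> b" and "{a'..b'} \<subseteq> {a..b}"
    and "n \<ge> 1"
  defines "J \<equiv> {a..b}" and "J' \<equiv> {a'..b'}"
  defines "X \<equiv> xitilde p u n J' J"
  shows "(\<exists>!f. xi_cond p u n J' J f)
    \<and> X = polyinv (ellS p u n J') (omegaS p u (n - 1) J) * ellS p u n J'
    \<and> (omegaS p u n J' div omegaS p u (n - 1) J') dvd X
    \<and> omegaS p u (n - 1) J dvd (X - 1)
    \<and> real p ^ card J' \<le> norm1 absv X
    \<and> norm1 absv X \<le> real p powi (int (card J') +
         \<lfloor>(real (card J) - 1) / (real p - 1)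
           + max 0 (1 / (real p - 1) + real (multiplicity p (fact (card J - 1)))
                    - ordv p absv (u ^ (p ^ (n - 1)) - 1))\<rfloor>)
    \<and> (real n > real (multiplicity p (fact (card J - 1))) - (ordv p absv (u - 1) - 1) \<longrightarrow>
         real p ^ card J' \<le> norm1 absv X
         \<and> norm1 absv X \<le> real p powi (int (card J') + beta_tilde p (card J))
         \<and> (beta_tilde p (card J) = 0 \<longrightarrow>
              (\<exists>h h'. integral_fps absv h \<and> integral_fps absv h' \<and> h * h' = 1
                  \<and> fps_of_poly X = h * fps_of_poly (ellS p u n J'))))"
proof -
  interpret padic_base_change absv p u a n
    using padic_abs_if_is_Qp[OF assms(1-3)] assms(4,8)
    by (simp add: padic_base_change_def padic_base_change_axioms_def padic_abs.near_one_def)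
  have J: "finite J" "a \<in> J" "J' \<subseteq> J"
    using assms(6,7) by (auto simp: J_def J'_def)
  note algebraic = xitilde_properties[OF assms(5) J, folded X_def]
  note norms = norm1_xitilde[OF assms(5) J, folded X_def]
  have "beta_tilde p (card J) \<le> \<lfloor>(real (card J) - 1) / (real p - 1) + max 0 x\<rfloor>" for x
    unfolding beta_tilde_def by (intro floor_mono) simp
  then have "norm1 absv X
      \<le> real p powi (int (card J') + \<lfloor>(real (card J) - 1) / (real p - 1) + max 0 x\<rfloor>)" for x
    using norms(2) by (meson add_left_mono order_trans p_powi_mono)
  then show ?thesis
    using algebraic norms by simp
qed

end
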